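(* Let $H,U$ be separable complex Hilbert spaces, $T>0$, $A$ the generator of a $C_0$-semigroup $e^{tA}$ on $H$ with $\|e^{tA}\|\le Ce^{\omega t}$, $K\in L^2(0,T;\mathbb R)$, $B\in\mathcal L(U,H)$, $Q\in\mathcal L(H)$ with $Q=Q^*\ge0$. Let $\tau\in(0,T)$, $X_0=(\xi_0,\xi)\in Y_\tau$, let $(\hat u(\cdot;\tau,X_0),\hat w(\cdot;\tau,X_0))$ be the optimal pair minimizing $J_\tau(\cdot,X_0)$, and for $\tau_1\in(\tau,T)$ let $X_1=(\hat w(\tau_1;\tau,X_0),\hat y)\in Y_{\tau_1}$ with $\hat y=\xi$ on $[0,\tau]$, $\hat y=\hat w(\cdot;\tau,X_0)$ on $(\tau,\tau_1]$. Then for all $t\in(\tau_1,T)$, $\hat u(t;\tau,X_0)=\hat u(t;\tau_1,X_1)$ and $\hat w(t;\tau,X_0)=\hat w(t;\tau_1,X_1)$, where $(\hat u(\cdot;\tau_1,X_1),\hat w(\cdot;\tau_1,X_1))$ is the optimal pair minimizing $J_{\tau_1}(\cdot,X_1)$.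
   Context: For $\tau\in(0,T)$, $Y_\tau=H\times L^2(0,\tau;H)$. Given $X_0=(\xi_0,\xi)\in Y_\tau$ and $u\in L^2(\tau,T;U)$, the state $w(\cdot;\tau,X_0)$ is the mild solution of $w'(t)=Aw(t)+\int_\tau^tK(t-s)w(s)ds+\int_0^\tau K(t-s)\xi(s)ds+Bu(t)$ on $(\tau,T)$, $w(\tau)=\xi_0$, i.e. the unique $w\in L^2(\tau,T;H)$ with $w(t)=e^{(t-\tau)A}\xi_0+\int_\tau^te^{(t-s)A}\int_\tau^sK(s-\sigma)w(\sigma)d\sigma ds+\int_\tau^te^{(t-s)A}\int_0^\tau K(s-\sigma)\xi(\sigma)d\sigma ds+\int_\tau^te^{(t-s)A}Bu(s)ds$ a.e. The cost is $J_\tau(u,X_0)=\int_\tau^T(\langle Qw(t),w(t)\rangle_H+\|u(t)\|_U^2)dt$; the optimal pair is the (unique) minimizing control with its state. *)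

theory Defs
  imports "HOL-Analysis.Analysis"
begin

definition L2_on :: "real \<Rightarrow> real \<Rightarrow> (real \<Rightarrow> 'a::{banach,second_countable_topology}) \<Rightarrow> bool" where
  "L2_on a b f \<longleftrightarrow> set_borel_measurable lborel {a<..<b} f \<and>
     set_integrable lborel {a<..<b} (\<lambda>t. (norm (f t))^2)"

definition C0_semigroup :: "(real \<Rightarrow> 'a::real_normed_vector \<Rightarrow> 'a) \<Rightarrow> bool" where
  "C0_semigroup S \<longleftrightarrow> (\<forall>t\<ge>0. bounded_linear (S t)) \<and> S 0 = id \<and>
     (\<forall>t s. t \<ge> 0 \<longrightarrow> s \<ge> 0 \<longrightarrow> S (t + s) = S t \<circ> S s) \<and>
     (\<forall>x. continuous_on {0..} (\<lambda>t. S t x))"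

definition generator :: "(real \<Rightarrow> 'a::real_normed_vector \<Rightarrow> 'a) \<Rightarrow> 'a set \<Rightarrow> ('a \<Rightarrow> 'a) \<Rightarrow> bool" where
  "generator S D A \<longleftrightarrow>
     D = {x. \<exists>y. ((\<lambda>h. (1 / h) *\<^sub>R (S h x - x)) \<longlongrightarrow> y) (at_right 0)} \<and>
     (\<forall>x\<in>D. ((\<lambda>h. (1 / h) *\<^sub>R (S h x - x)) \<longlongrightarrow> A x) (at_right 0))"

text \<open>Orthogonal complex structure: a real Hilbert space together with J is a complex
  Hilbert space (multiplication by i is J).\<close>
definition complex_structure :: "('a::real_inner \<Rightarrow> 'a) \<Rightarrow> bool" where
  "complex_structure J \<longleftrightarrow> bounded_linear J \<and> (\<forall>x. J (J x) = - x) \<and>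
     (\<forall>x y. inner (J x) (J y) = inner x y)"

text \<open>Mild solution on [tau,T] of the controlled Volterra equation with initial datum xi0
  and history xi on [0,tau]; the identity is required for every t in [tau,T]
  (continuous representative, so that point values make sense).\<close>
definition mild_solution ::
  "(real \<Rightarrow> 'h \<Rightarrow> 'h) \<Rightarrow> (real \<Rightarrow> real) \<Rightarrow> ('u \<Rightarrow> 'h) \<Rightarrow> real \<Rightarrow> real \<Rightarrow>
   'h \<Rightarrow> (real \<Rightarrow> 'h) \<Rightarrow> (real \<Rightarrow> 'u) \<Rightarrow> (real \<Rightarrow> 'h::{real_inner,banach,second_countable_topology}) \<Rightarrow> bool" where
  "mild_solution S K B \<tau> T \<xi>0 \<xi> u w \<longleftrightarrow> L2_on \<tau> T w \<and>
     (\<forall>t\<in>{\<tau>..T}. w t =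
        S (t - \<tau>) \<xi>0
      + (LINT s:{\<tau>..t}|lborel. S (t - s) (LINT \<sigma>:{\<tau>..s}|lborel. K (s - \<sigma>) *\<^sub>R w \<sigma>))
      + (LINT s:{\<tau>..t}|lborel. S (t - s) (LINT \<sigma>:{0..\<tau>}|lborel. K (s - \<sigma>) *\<^sub>R \<xi> \<sigma>))
      + (LINT s:{\<tau>..t}|lborel. S (t - s) (B (u s))))"

definition cost :: "('h::real_inner \<Rightarrow> 'h) \<Rightarrow> real \<Rightarrow> real \<Rightarrow> (real \<Rightarrow> 'u::real_normed_vector) \<Rightarrow> (real \<Rightarrow> 'h) \<Rightarrow> real" where
  "cost Q \<tau> T u w = (LINT t:{\<tau>..T}|lborel. inner (Q (w t)) (w t) + (norm (u t))^2)"

definition optimal_pair ::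
  "(real \<Rightarrow> 'h \<Rightarrow> 'h) \<Rightarrow> (real \<Rightarrow> real) \<Rightarrow> ('u \<Rightarrow> 'h) \<Rightarrow> ('h \<Rightarrow> 'h) \<Rightarrow> real \<Rightarrow> real \<Rightarrow>
   'h \<Rightarrow> (real \<Rightarrow> 'h) \<Rightarrow> (real \<Rightarrow> 'u::{real_inner,banach,second_countable_topology})
   \<Rightarrow> (real \<Rightarrow> 'h::{real_inner,banach,second_countable_topology}) \<Rightarrow> bool" where
  "optimal_pair S K B Q \<tau> T \<xi>0 \<xi> u w \<longleftrightarrow>
     L2_on \<tau> T u \<and> mild_solution S K B \<tau> T \<xi>0 \<xi> u w \<and>
     (\<forall>v z. L2_on \<tau> T v \<and> mild_solution S K B \<tau> T \<xi>0 \<xi> v z \<longrightarrow>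
        cost Q \<tau> T u w \<le> cost Q \<tau> T v z)"

end

theory Submission
  imports Defs
begin

(* Bellman's principle plus uniqueness of optimal pairs.
   Restarting the mild equation at tau1 with the state wh tau1 and with the history extended
   by wh reproduces wh on [tau1, T] (semigroup law), so the tail of (uh, wh) is admissible for
   the problem at tau1.  It is optimal there, since a cheaper tail glued onto (uh, wh) restricted
   to [tau, tau1] would beat (uh, wh).  Finally the problem at tau1 has only one optimal pair:
   admissible pairs form an affine set on which the cost is strictly convex in the control
   (parallelogram identity), so optimal controls agree a.e.; the difference of the two states
   then solves the homogeneous Volterra equation, whose only solution is zero by Cauchy-Schwarz
   on the kernel term and a bootstrap over intervals of fixed small length. *)

section \<open>Set integrals and square-integrable functions\<close>

lemma L2_on_Icc_iff:
  "L2_on a b f \<longleftrightarrow> set_borel_measurable lborel {a..b} f \<and>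
     set_integrable lborel {a..b} (\<lambda>t. (norm (f t))\<^sup>2)"
proof -
  have "(\<lambda>x. indicator {a<..<b} x *\<^sub>R f x) \<in> borel_measurable lborel \<longleftrightarrow>
      (\<lambda>x. indicator {a..b} x *\<^sub>R f x) \<in> borel_measurable lborel"
    by (intro iffI; erule measurable_discrete_difference[where X="{a,b}"])
       (auto simp: indicator_def)
  moreover have "set_integrable lborel {a<..<b} (\<lambda>t. (norm (f t))\<^sup>2) \<longleftrightarrow>
      set_integrable lborel {a..b} (\<lambda>t. (norm (f t))\<^sup>2)"
    by (rule set_integrable_discrete_difference[where X="{a,b}"]) auto
  ultimately show ?thesis
    unfolding L2_on_def set_borel_measurable_def by simp
qed

lemma L2_on_subinterval:
  assumes "L2_on a b f" "a \<le> c" "d \<le> b"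
  shows "L2_on c d f"
proof -
  have "{c<..<d} \<subseteq> {a<..<b}"
    using assms(2,3) by auto
  then show ?thesis
    using assms(1) set_borel_measurable_subset[of lborel "{a<..<b}" f "{c<..<d}"]
      set_integrable_subset[of lborel "{a<..<b}" _ "{c<..<d}"]
    unfolding L2_on_def by auto
qed

lemma L2_on_join:
  assumes f: "L2_on a b f" and g: "L2_on b c g" and "a \<le> b" "b \<le> c"
  shows "L2_on a c (\<lambda>s. if s \<le> b then f s else g s)"
proof -
  let ?h = "\<lambda>s. if s \<le> b then f s else g s"
  have eq: "(\<lambda>x. indicator {a..c} x *\<^sub>R ?h x) =
      (\<lambda>x. indicator {a..b} x *\<^sub>R f x + indicator {b<..c} x *\<^sub>R (indicator {b..c} x *\<^sub>R g x))"
    using assms(3,4) by (auto simp: indicator_def fun_eq_iff)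
  have mf: "(\<lambda>x. indicator {a..b} x *\<^sub>R f x) \<in> borel_measurable lborel"
    and mg: "(\<lambda>x. indicator {b..c} x *\<^sub>R g x) \<in> borel_measurable lborel"
    using f g by (auto simp: L2_on_Icc_iff set_borel_measurable_def)
  have "set_borel_measurable lborel {a..c} ?h"
    unfolding set_borel_measurable_def eq
    by (rule borel_measurable_add[OF mf borel_measurable_scaleR[OF borel_measurable_indicator mg]]) simp
  moreover have i1: "set_integrable lborel {a..b} (\<lambda>t. (norm (?h t))\<^sup>2)"
  proof -
    have "set_integrable lborel {a..b} (\<lambda>t. (norm (f t))\<^sup>2)"
      using f unfolding L2_on_Icc_iff by simp
    then show ?thesis
      by (rule set_integrable_cong[THEN iffD1, rotated -1]) auto
  qed
  moreover have i2: "set_integrable lborel {b<..c} (\<lambda>t. (norm (?h t))\<^sup>2)"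
  proof -
    have "set_integrable lborel {b<..c} (\<lambda>t. (norm (g t))\<^sup>2)"
      using g unfolding L2_on_Icc_iff by (rule conjE) (erule set_integrable_subset; auto)
    then show ?thesis
      by (rule set_integrable_cong[THEN iffD1, rotated -1]) auto
  qed
  moreover have "{a..b} \<union> {b<..c} = {a..c}"
    using assms(3,4) by auto
  ultimately show ?thesis
    unfolding L2_on_Icc_iff using set_integrable_Un[OF i1 i2] by auto
qed

lemma set_integral_lincomb:
  fixes f g :: "'c \<Rightarrow> 'a::{banach,second_countable_topology}"
  assumes "set_integrable M A f" "set_integrable M A g"
  shows "set_integrable M A (\<lambda>s. p *\<^sub>R f s + q *\<^sub>R g s)"
    and "(LINT s:A|M. p *\<^sub>R f s + q *\<^sub>R g s) =
      p *\<^sub>R (LINT s:A|M. f s) + q *\<^sub>R (LINT s:A|M. g s)"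
  using assms by (simp_all add: set_integral_add)

lemma set_integrable_Icc_bounded:
  fixes f :: "real \<Rightarrow> 'a::{banach,second_countable_topology}"
  assumes "set_borel_measurable lborel {a..b} f" "\<And>s. s \<in> {a..b} \<Longrightarrow> norm (f s) \<le> C"
  shows "set_integrable lborel {a..b} f"
  unfolding set_integrable_def
  by (rule integrableI_bounded_set[where A="{a..b}" and B=C])
     (use assms in \<open>auto simp: set_borel_measurable_def emeasure_lborel_Icc_eq\<close>)

lemma set_borel_measurable_norm:
  fixes g :: "'c \<Rightarrow> 'a::{banach,second_countable_topology}"
  assumes "set_borel_measurable M A g"
  shows "set_borel_measurable M A (\<lambda>s. norm (g s))"
    and "set_borel_measurable M A (\<lambda>s. (norm (g s))\<^sup>2)"
proof -
  have "(\<lambda>s. indicator A s *\<^sub>R norm (g s)) = (\<lambda>s. norm (indicator A s *\<^sub>R g s))"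
    and "(\<lambda>s. indicator A s *\<^sub>R (norm (g s))\<^sup>2) = (\<lambda>s. (norm (indicator A s *\<^sub>R g s))\<^sup>2)"
    by (auto simp: fun_eq_iff indicator_def)
  moreover have m: "(\<lambda>s. norm (indicator A s *\<^sub>R g s)) \<in> borel_measurable M"
    by (rule measurable_compose[OF assms[unfolded set_borel_measurable_def] borel_measurable_norm])
  moreover note borel_measurable_power[OF m, of 2]
  ultimately show "set_borel_measurable M A (\<lambda>s. norm (g s))"
    and "set_borel_measurable M A (\<lambda>s. (norm (g s))\<^sup>2)"
    unfolding set_borel_measurable_def by simp_all
qed

lemma L2_on_imp_set_integrable:
  fixes f :: "real \<Rightarrow> 'a::{banach,second_countable_topology}"
  assumes "L2_on a b f"
  shows "set_integrable lborel {a..b} (\<lambda>t. norm (f t))" and "set_integrable lborel {a..b} f"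
proof -
  have meas: "set_borel_measurable lborel {a..b} f"
    and sq: "set_integrable lborel {a..b} (\<lambda>t. (norm (f t))\<^sup>2)"
    using assms unfolding L2_on_Icc_iff by auto
  have one_plus: "set_integrable lborel {a..b} (\<lambda>t. 1 + (norm (f t))\<^sup>2)"
    using set_integral_add(1)[OF set_integrable_Icc_bounded[of a b "\<lambda>_. 1::real" 1] sq]
    by (simp add: set_borel_measurable_def)
  have "norm (f t) \<le> 1 + (norm (f t))\<^sup>2" for t
  proof -
    have "2 * norm (f t) \<le> (norm (f t))\<^sup>2 + 1"
      using sum_squares_bound[of "norm (f t)" 1] by simp
    then show ?thesis
      using norm_ge_zero[of "f t"] by linarith
  qed
  then show "set_integrable lborel {a..b} (\<lambda>t. norm (f t))"
    by (intro set_integrable_bound[OF one_plus set_borel_measurable_norm(1)[OF meas]]) auto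
  then show "set_integrable lborel {a..b} f"
    using meas by (rule set_integrable_bound[where f="\<lambda>t. norm (f t)"]) auto
qed

lemma L2_on_lincomb:
  fixes f g :: "real \<Rightarrow> 'a::{banach,second_countable_topology}"
  assumes f: "L2_on a b f" and g: "L2_on a b g"
  shows "L2_on a b (\<lambda>s. p *\<^sub>R f s + q *\<^sub>R g s)"
proof -
  have eq: "(\<lambda>s. indicator {a..b} s *\<^sub>R (p *\<^sub>R f s + q *\<^sub>R g s)) =
      (\<lambda>s. p *\<^sub>R (indicator {a..b} s *\<^sub>R f s) + q *\<^sub>R (indicator {a..b} s *\<^sub>R g s))"
    by (auto simp: fun_eq_iff indicator_def)
  have fg: "(\<lambda>s. indicator {a..b} s *\<^sub>R f s) \<in> borel_measurable lborel"
    "(\<lambda>s. indicator {a..b} s *\<^sub>R g s) \<in> borel_measurable lborel"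
    using f g unfolding L2_on_Icc_iff set_borel_measurable_def by auto
  have meas: "set_borel_measurable lborel {a..b} (\<lambda>s. p *\<^sub>R f s + q *\<^sub>R g s)"
    unfolding set_borel_measurable_def eq
    by (rule borel_measurable_add[OF borel_measurable_scaleR[OF borel_measurable_const fg(1)]
          borel_measurable_scaleR[OF borel_measurable_const fg(2)]])
  have bound: "(norm (p *\<^sub>R f s + q *\<^sub>R g s))\<^sup>2 \<le> (2 * p\<^sup>2) * (norm (f s))\<^sup>2 + (2 * q\<^sup>2) * (norm (g s))\<^sup>2"
    for s
  proof -
    have "(norm (p *\<^sub>R f s + q *\<^sub>R g s))\<^sup>2 \<le> (\<bar>p\<bar> * norm (f s) + \<bar>q\<bar> * norm (g s))\<^sup>2"
      using norm_triangle_ineq[of "p *\<^sub>R f s" "q *\<^sub>R g s"] by (intro power_mono) auto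
    also have "\<dots> \<le> 2 * (\<bar>p\<bar> * norm (f s))\<^sup>2 + 2 * (\<bar>q\<bar> * norm (g s))\<^sup>2"
      using sum_squares_bound[of "\<bar>p\<bar> * norm (f s)" "\<bar>q\<bar> * norm (g s)"]
      by (simp add: power2_sum)
    finally show ?thesis
      by (simp add: power_mult_distrib)
  qed
  have "set_integrable lborel {a..b}
      (\<lambda>s. (2 * p\<^sup>2) * (norm (f s))\<^sup>2 + (2 * q\<^sup>2) * (norm (g s))\<^sup>2)"
    using f g unfolding L2_on_Icc_iff by (intro set_integral_add(1)) auto
  then have "set_integrable lborel {a..b} (\<lambda>s. (norm (p *\<^sub>R f s + q *\<^sub>R g s))\<^sup>2)"
    by (rule set_integrable_bound[OF _ set_borel_measurable_norm(2)[OF meas]]) (simp add: bound)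
  with meas show ?thesis
    unfolding L2_on_Icc_iff by simp
qed

lemma L2_on_diff: "L2_on a b f \<Longrightarrow> L2_on a b g \<Longrightarrow> L2_on a b (\<lambda>s. f s - g s)"
  using L2_on_lincomb[of a b f g 1 "-1"] by simp

lemma Cauchy_Schwarz_integral:
  fixes f g :: "'a \<Rightarrow> real"
  assumes [measurable]: "f \<in> borel_measurable M" "g \<in> borel_measurable M"
    and nonneg: "\<And>x. 0 \<le> f x" "\<And>x. 0 \<le> g x"
    and sq_int: "integrable M (\<lambda>x. (f x)\<^sup>2)" "integrable M (\<lambda>x. (g x)\<^sup>2)"
  shows "integrable M (\<lambda>x. f x * g x)"
    and "(\<integral>x. f x * g x \<partial>M) \<le> sqrt (\<integral>x. (f x)\<^sup>2 \<partial>M) * sqrt (\<integral>x. (g x)\<^sup>2 \<partial>M)"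
proof -
  have "f x * g x \<le> (f x)\<^sup>2 + (g x)\<^sup>2" for x
  proof -
    have "2 * (f x * g x) \<le> (f x)\<^sup>2 + (g x)\<^sup>2"
      using sum_squares_bound[of "f x" "g x"] by (simp only: mult.assoc)
    moreover have "0 \<le> f x * g x"
      using nonneg by simp
    ultimately show ?thesis
      by linarith
  qed
  then show prod_int: "integrable M (\<lambda>x. f x * g x)"
    by (intro Bochner_Integration.integrable_bound[OF Bochner_Integration.integrable_add[OF sq_int]])
       (auto simp: nonneg)
  have "(\<integral>\<^sup>+x. ennreal (f x) * ennreal (g x) \<partial>M) = ennreal (\<integral>x. f x * g x \<partial>M)"
    using prod_int nonneg by (simp add: ennreal_mult[symmetric] nn_integral_eq_integral)
  then have "ennreal ((\<integral>x. f x * g x \<partial>M)\<^sup>2) = (\<integral>\<^sup>+x. ennreal (f x) * ennreal (g x) \<partial>M)\<^sup>2"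
    by (simp add: ennreal_power nonneg)
  also have "\<dots> \<le> (\<integral>\<^sup>+x. ennreal (f x) ^ 2 \<partial>M) * (\<integral>\<^sup>+x. ennreal (g x) ^ 2 \<partial>M)"
    by (rule Cauchy_Schwarz_nn_integral) auto
  also have "\<dots> = ennreal ((\<integral>x. (f x)\<^sup>2 \<partial>M) * (\<integral>x. (g x)\<^sup>2 \<partial>M))"
    using sq_int by (simp add: ennreal_power nonneg nn_integral_eq_integral ennreal_mult)
  finally have "(\<integral>x. f x * g x \<partial>M)\<^sup>2 \<le> (\<integral>x. (f x)\<^sup>2 \<partial>M) * (\<integral>x. (g x)\<^sup>2 \<partial>M)"
    by (auto simp: ennreal_le_iff2)
  then show "(\<integral>x. f x * g x \<partial>M) \<le> sqrt (\<integral>x. (f x)\<^sup>2 \<partial>M) * sqrt (\<integral>x. (g x)\<^sup>2 \<partial>M)"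
    by (metis real_le_rsqrt real_sqrt_mult)
qed

lemma set_integral_scaleR_Cauchy_Schwarz:
  fixes k :: "'a \<Rightarrow> real" and w :: "'a \<Rightarrow> 'b::{banach,second_countable_topology}"
  assumes k: "set_borel_measurable M A k" and w: "set_borel_measurable M A w"
    and k_sq: "set_integrable M A (\<lambda>x. (k x)\<^sup>2)" and w_sq: "set_integrable M A (\<lambda>x. (norm (w x))\<^sup>2)"
  shows "set_integrable M A (\<lambda>x. k x *\<^sub>R w x)"
    and "norm (LINT x:A|M. k x *\<^sub>R w x) \<le> sqrt (LINT x:A|M. (k x)\<^sup>2) * sqrt (LINT x:A|M. (norm (w x))\<^sup>2)"
proof -
  define f where "f x = \<bar>indicator A x * k x\<bar>" for x
  define g where "g x = norm (indicator A x *\<^sub>R w x)" for x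
  have km: "(\<lambda>x. indicator A x * k x) \<in> borel_measurable M"
    and wm: "(\<lambda>x. indicator A x *\<^sub>R w x) \<in> borel_measurable M"
    using k w unfolding set_borel_measurable_def by simp_all
  have f_sq: "(\<lambda>x. (f x)\<^sup>2) = (\<lambda>x. indicator A x *\<^sub>R (k x)\<^sup>2)"
    and g_sq: "(\<lambda>x. (g x)\<^sup>2) = (\<lambda>x. indicator A x *\<^sub>R (norm (w x))\<^sup>2)"
    unfolding f_def g_def by (auto simp: fun_eq_iff indicator_def)
  have f_meas: "f \<in> borel_measurable M" and g_meas: "g \<in> borel_measurable M"
    unfolding f_def g_def using km wm by measurable
  have "0 \<le> f x" "0 \<le> g x" for x
    by (simp_all add: f_def g_def)
  note CS = Cauchy_Schwarz_integral[OF f_meas g_meas this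
      k_sq[unfolded set_integrable_def f_sq[symmetric]] w_sq[unfolded set_integrable_def g_sq[symmetric]]]
  have fg: "f x * g x = norm (indicator A x *\<^sub>R (k x *\<^sub>R w x))" for x
    unfolding f_def g_def by (simp add: indicator_def abs_mult)
  have "(\<lambda>x. indicator A x *\<^sub>R (k x *\<^sub>R w x)) = (\<lambda>x. (indicator A x * k x) *\<^sub>R (indicator A x *\<^sub>R w x))"
    by (auto simp: fun_eq_iff indicator_def)
  then have prod_meas: "(\<lambda>x. indicator A x *\<^sub>R (k x *\<^sub>R w x)) \<in> borel_measurable M"
    using borel_measurable_scaleR[OF km wm] by simp
  show "set_integrable M A (\<lambda>x. k x *\<^sub>R w x)"
    unfolding set_integrable_def
    by (rule Bochner_Integration.integrable_bound[OF CS(1) prod_meas])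
       (intro AE_I2, simp only: fg[symmetric] real_norm_def abs_ge_self)
  have "norm (LINT x:A|M. k x *\<^sub>R w x) \<le> (\<integral>x. f x * g x \<partial>M)"
    unfolding set_lebesgue_integral_def fg by (rule integral_norm_bound)
  also have "\<dots> \<le> sqrt (\<integral>x. (f x)\<^sup>2 \<partial>M) * sqrt (\<integral>x. (g x)\<^sup>2 \<partial>M)"
    using CS(2) by (simp add: f_def g_def)
  finally show "norm (LINT x:A|M. k x *\<^sub>R w x) \<le> sqrt (LINT x:A|M. (k x)\<^sup>2) * sqrt (LINT x:A|M. (norm (w x))\<^sup>2)"
    unfolding f_sq g_sq set_lebesgue_integral_def .
qed

lemma set_integral_Icc_split:
  fixes f :: "real \<Rightarrow> 'a::{banach,second_countable_topology}"
  assumes f: "set_integrable lborel {a..c} f" and "a \<le> b" "b \<le> c"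
  shows "(LINT s:{a..c}|lborel. f s) = (LINT s:{a..b}|lborel. f s) + (LINT s:{b..c}|lborel. f s)"
proof -
  have "{a..c} = {a..b} \<union> {b<..c}"
    using assms(2,3) by auto
  moreover have "set_integrable lborel {a..b} f" "set_integrable lborel {b<..c} f"
    using assms(2,3) by (auto intro!: set_integrable_subset[OF f])
  moreover have "{a..b} \<inter> {b<..c} = {}"
    by auto
  ultimately have "(LINT s:{a..c}|lborel. f s) = (LINT s:{a..b}|lborel. f s) + (LINT s:{b<..c}|lborel. f s)"
    using set_integral_Un[of "{a..b}" "{b<..c}" lborel f] by simp
  moreover have "(LINT s:{b<..c}|lborel. f s) = (LINT s:{b..c}|lborel. f s)"
    by (rule set_integral_discrete_difference[where X="{b}"]) auto
  ultimately show ?thesis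
    by simp
qed

lemma set_integral_singleton_lborel:
  "(LINT s:{a::real}|lborel. (f s :: 'a::{banach,second_countable_topology})) = 0"
proof -
  have "(LINT s:{a}|lborel. f s) = (LINT s:{}|lborel. f s)"
    by (rule set_integral_discrete_difference[where X="{a}"]) auto
  then show ?thesis
    by (simp add: set_lebesgue_integral_def)
qed

lemma set_integral_bounded_linear:
  fixes f :: "'c \<Rightarrow> 'a::{banach,second_countable_topology}"
    and L :: "'a \<Rightarrow> 'b::{banach,second_countable_topology}"
  assumes L: "bounded_linear L" and f: "set_integrable M A f"
  shows "set_integrable M A (\<lambda>s. L (f s))"
    and "(LINT s:A|M. L (f s)) = L (LINT s:A|M. f s)"
proof -
  have eq: "(\<lambda>s. indicator A s *\<^sub>R L (f s)) = (\<lambda>s. L (indicator A s *\<^sub>R f s))"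
    using bounded_linear.linear[OF L] by (simp add: fun_eq_iff linear_scale)
  show "set_integrable M A (\<lambda>s. L (f s))"
    unfolding set_integrable_def eq
    using integrable_bounded_linear[OF L f[unfolded set_integrable_def]] .
  show "(LINT s:A|M. L (f s)) = L (LINT s:A|M. f s)"
    unfolding set_lebesgue_integral_def eq
    using integral_bounded_linear[OF L f[unfolded set_integrable_def]] by simp
qed

lemma set_borel_measurable_bounded_linear:
  fixes f :: "'c \<Rightarrow> 'a::{banach,second_countable_topology}"
    and L :: "'a \<Rightarrow> 'b::{banach,second_countable_topology}"
  assumes L: "bounded_linear L" and f: "set_borel_measurable M A f"
  shows "set_borel_measurable M A (\<lambda>s. L (f s))"
proof -
  have "(\<lambda>s. indicator A s *\<^sub>R L (f s)) = (\<lambda>s. L (indicator A s *\<^sub>R f s))"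
    using bounded_linear.linear[OF L] by (simp add: fun_eq_iff linear_scale)
  moreover have "L \<in> borel_measurable borel"
    by (rule borel_measurable_continuous_onI[OF linear_continuous_on[OF L]])
  ultimately show ?thesis
    using measurable_compose[OF f[unfolded set_borel_measurable_def]]
    unfolding set_borel_measurable_def by simp
qed

lemma L2_on_zero [simp]: "L2_on a b (\<lambda>_. 0 :: 'a::{banach,second_countable_topology})"
  by (simp add: L2_on_def set_borel_measurable_def set_integrable_def)

section \<open>Quadratic cost\<close>

lemma quadratic_form_midpoint:
  fixes Q :: "'a::real_inner \<Rightarrow> 'a"
  assumes "linear Q"
  shows "inner (Q ((1/2) *\<^sub>R x + (1/2) *\<^sub>R y)) ((1/2) *\<^sub>R x + (1/2) *\<^sub>R y) =
    (1/2) * inner (Q x) x + (1/2) * inner (Q y) y - (1/4) * inner (Q (x - y)) (x - y)"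
  using assms
  by (simp add: linear_add linear_scale linear_diff inner_add_left inner_add_right
      inner_diff_left inner_diff_right algebra_simps)

lemma cost_integrable:
  fixes Q :: "'h::{real_inner,banach,second_countable_topology} \<Rightarrow> 'h"
    and u :: "real \<Rightarrow> 'u::{real_inner,banach,second_countable_topology}"
  assumes Q: "bounded_linear Q" and u: "L2_on a b u" and w: "L2_on a b w"
  shows "set_integrable lborel {a..b} (\<lambda>t. inner (Q (w t)) (w t) + (norm (u t))\<^sup>2)"
proof -
  obtain C where C: "\<And>x. norm (Q x) \<le> norm x * C"
    using bounded_linear.bounded[OF Q] by blast
  have w_meas: "(\<lambda>t. indicator {a..b} t *\<^sub>R w t) \<in> borel_measurable lborel"
    using w unfolding L2_on_Icc_iff set_borel_measurable_def by simp
  have eq: "(\<lambda>t. indicator {a..b} t *\<^sub>R inner (Q (w t)) (w t)) =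
      (\<lambda>t. inner (Q (indicator {a..b} t *\<^sub>R w t)) (indicator {a..b} t *\<^sub>R w t))"
    using linear_0[OF bounded_linear.linear[OF Q]] by (auto simp: fun_eq_iff indicator_def)
  have "Q \<in> borel_measurable borel"
    by (rule borel_measurable_continuous_onI[OF linear_continuous_on[OF Q]])
  then have meas: "set_borel_measurable lborel {a..b} (\<lambda>t. inner (Q (w t)) (w t))"
    unfolding set_borel_measurable_def eq
    by (rule borel_measurable_inner[OF measurable_compose[OF w_meas] w_meas])
  have bound_int: "set_integrable lborel {a..b} (\<lambda>t. C * (norm (w t))\<^sup>2)"
    using w unfolding L2_on_Icc_iff by simp
  have bound: "norm (inner (Q (w t)) (w t)) \<le> norm (C * (norm (w t))\<^sup>2)" for t
  proof -
    have "norm (inner (Q (w t)) (w t)) \<le> norm (Q (w t)) * norm (w t)"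
      using Cauchy_Schwarz_ineq2 by simp
    also have "\<dots> \<le> norm (w t) * C * norm (w t)"
      using C by (simp add: mult_right_mono)
    finally show ?thesis
      by (simp add: power2_eq_square mult_ac)
  qed
  have "set_integrable lborel {a..b} (\<lambda>t. inner (Q (w t)) (w t))"
    by (rule set_integrable_bound[OF bound_int meas]) (intro AE_I2 impI bound)
  moreover have "set_integrable lborel {a..b} (\<lambda>t. (norm (u t))\<^sup>2)"
    using u unfolding L2_on_Icc_iff by simp
  ultimately show ?thesis
    by (rule set_integral_add(1))
qed

lemma cost_nonneg:
  assumes "\<And>x. 0 \<le> inner (Q x) x"
  shows "0 \<le> cost Q a b u w"
  unfolding cost_def set_lebesgue_integral_def
  by (rule Bochner_Integration.integral_nonneg) (simp add: assms)

lemma control_AE_eq_0_of_cost_eq_0: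
  fixes Q :: "'h::{real_inner,banach,second_countable_topology} \<Rightarrow> 'h"
    and u :: "real \<Rightarrow> 'u::{real_inner,banach,second_countable_topology}"
  assumes Q: "bounded_linear Q" and Q_nonneg: "\<And>x. 0 \<le> inner (Q x) x"
    and u: "L2_on a b u" and w: "L2_on a b w" and cost_0: "cost Q a b u w = 0"
  shows "AE t in lborel. t \<in> {a..b} \<longrightarrow> u t = 0"
proof -
  let ?f = "\<lambda>t. indicator {a..b} t *\<^sub>R (inner (Q (w t)) (w t) + (norm (u t))\<^sup>2)"
  have "AE t in lborel. ?f t = 0"
    using cost_0 cost_integrable[OF Q u w] Q_nonneg
    by (subst integral_nonneg_eq_0_iff_AE[symmetric])
       (auto simp: cost_def set_lebesgue_integral_def set_integrable_def indicator_def)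
  then show ?thesis
  proof (rule eventually_mono)
    fix t
    assume "?f t = 0"
    then show "t \<in> {a..b} \<longrightarrow> u t = 0"
      using Q_nonneg[of "w t"] by (auto simp: add_nonneg_eq_0_iff)
  qed
qed

lemma cost_split:
  fixes Q :: "'h::{real_inner,banach,second_countable_topology} \<Rightarrow> 'h"
    and u :: "real \<Rightarrow> 'u::{real_inner,banach,second_countable_topology}"
  assumes "bounded_linear Q" "L2_on a c u" "L2_on a c w" "a \<le> b" "b \<le> c"
  shows "cost Q a c u w = cost Q a b u w + cost Q b c u w"
  unfolding cost_def using assms by (intro set_integral_Icc_split cost_integrable) auto

lemma cost_join:
  fixes Q :: "'h::{real_inner,banach,second_countable_topology} \<Rightarrow> 'h"
    and u :: "real \<Rightarrow> 'u::{real_inner,banach,second_countable_topology}"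
  assumes Q: "bounded_linear Q" and "L2_on a b u" "L2_on a b w" "L2_on b c v" "L2_on b c z"
    and "a \<le> b" "b \<le> c"
  shows "cost Q a c (\<lambda>s. if s \<le> b then u s else v s) (\<lambda>s. if s \<le> b then w s else z s) =
    cost Q a b u w + cost Q b c v z"
proof -
  let ?u = "\<lambda>s. if s \<le> b then u s else v s" and ?w = "\<lambda>s. if s \<le> b then w s else z s"
  have "cost Q a c ?u ?w = cost Q a b ?u ?w + cost Q b c ?u ?w"
    using assms by (intro cost_split L2_on_join) auto
  moreover have "cost Q a b ?u ?w = cost Q a b u w"
    unfolding cost_def by (rule set_lebesgue_integral_cong) auto
  moreover have "cost Q b c ?u ?w = cost Q b c v z"
  proof -
    have "cost Q b c ?u ?w = (LINT t:{b<..c}|lborel. inner (Q (?w t)) (?w t) + (norm (?u t))\<^sup>2)"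
      and "cost Q b c v z = (LINT t:{b<..c}|lborel. inner (Q (z t)) (z t) + (norm (v t))\<^sup>2)"
      unfolding cost_def by (rule set_integral_discrete_difference[where X="{b}"]; auto)+
    moreover have "(LINT t:{b<..c}|lborel. inner (Q (?w t)) (?w t) + (norm (?u t))\<^sup>2) =
        (LINT t:{b<..c}|lborel. inner (Q (z t)) (z t) + (norm (v t))\<^sup>2)"
      by (rule set_lebesgue_integral_cong) auto
    ultimately show ?thesis
      by simp
  qed
  ultimately show ?thesis
    by simp
qed

lemma cost_midpoint:
  fixes Q :: "'h::{real_inner,banach,second_countable_topology} \<Rightarrow> 'h"
    and u :: "real \<Rightarrow> 'u::{real_inner,banach,second_countable_topology}"
  assumes Q: "bounded_linear Q"
    and u: "L2_on a b u" "L2_on a b u'" and w: "L2_on a b w" "L2_on a b w'"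
  shows "cost Q a b (\<lambda>t. (1/2) *\<^sub>R u t + (1/2) *\<^sub>R u' t) (\<lambda>t. (1/2) *\<^sub>R w t + (1/2) *\<^sub>R w' t) =
    (1/2) * cost Q a b u w + (1/2) * cost Q a b u' w' - (1/4) * cost Q a b (\<lambda>t. u t - u' t) (\<lambda>t. w t - w' t)"
proof -
  have norm_midpoint: "(norm ((1/2) *\<^sub>R x + (1/2) *\<^sub>R y))\<^sup>2 =
      (1/2) * (norm x)\<^sup>2 + (1/2) * (norm y)\<^sup>2 - (1/4) * (norm (x - y))\<^sup>2" for x y :: 'u
    using quadratic_form_midpoint[OF linear_id, of x y] by (simp add: power2_norm_eq_inner)
  define F where "F v z t = inner (Q (z t)) (z t) + (norm (v t))\<^sup>2"
    for v :: "real \<Rightarrow> 'u" and z :: "real \<Rightarrow> 'h" and t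
  have cost_F: "cost Q a b v z = (LINT t:{a..b}|lborel. F v z t)" for v z
    unfolding cost_def F_def ..
  have int: "set_integrable lborel {a..b} (F u w)" "set_integrable lborel {a..b} (F u' w')"
    "set_integrable lborel {a..b} (F (\<lambda>t. u t - u' t) (\<lambda>t. w t - w' t))"
    unfolding F_def using cost_integrable[OF Q u(1) w(1)] cost_integrable[OF Q u(2) w(2)]
      cost_integrable[OF Q L2_on_diff[OF u] L2_on_diff[OF w]] by simp_all
  have pointwise: "F (\<lambda>t. (1/2) *\<^sub>R u t + (1/2) *\<^sub>R u' t) (\<lambda>t. (1/2) *\<^sub>R w t + (1/2) *\<^sub>R w' t) t =
      ((1/2) *\<^sub>R F u w t + (1/2) *\<^sub>R F u' w' t) - (1/4) *\<^sub>R F (\<lambda>t. u t - u' t) (\<lambda>t. w t - w' t) t" for t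
    unfolding F_def quadratic_form_midpoint[OF bounded_linear.linear[OF Q]] norm_midpoint
    by (simp add: algebra_simps)
  have "cost Q a b (\<lambda>t. (1/2) *\<^sub>R u t + (1/2) *\<^sub>R u' t) (\<lambda>t. (1/2) *\<^sub>R w t + (1/2) *\<^sub>R w' t) =
      (LINT t:{a..b}|lborel. ((1/2) *\<^sub>R F u w t + (1/2) *\<^sub>R F u' w' t) -
        (1/4) *\<^sub>R F (\<lambda>t. u t - u' t) (\<lambda>t. w t - w' t) t)"
    unfolding cost_F pointwise ..
  also have "\<dots> = (LINT t:{a..b}|lborel. (1/2) *\<^sub>R F u w t + (1/2) *\<^sub>R F u' w' t) -
      (LINT t:{a..b}|lborel. (1/4) *\<^sub>R F (\<lambda>t. u t - u' t) (\<lambda>t. w t - w' t) t)"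
    by (rule set_integral_diff(2)[OF set_integral_lincomb(1)[OF int(1,2)] set_integrable_scaleR_right[OF int(3)]])
  also have "\<dots> = (1/2) * cost Q a b u w + (1/2) * cost Q a b u' w' -
      (1/4) * cost Q a b (\<lambda>t. u t - u' t) (\<lambda>t. w t - w' t)"
    unfolding cost_F set_integral_lincomb(2)[OF int(1,2)] set_integral_scaleR_right by simp
  finally show ?thesis .
qed

section \<open>The state equation\<close>

lemma exponential_bound_on_interval:
  fixes S :: "real \<Rightarrow> 'a::real_normed_vector \<Rightarrow> 'a"
  assumes "\<forall>t\<ge>0. \<forall>x. norm (S t x) \<le> C * exp (\<omega> * t) * norm x" "0 \<le> t" "t \<le> T"
  shows "norm (S t x) \<le> \<bar>C\<bar> * exp (\<bar>\<omega>\<bar> * T) * norm x"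
proof -
  have "\<omega> * t \<le> \<bar>\<omega>\<bar> * T"
    using assms(2,3) by (smt (verit) mult_left_mono mult_right_mono abs_ge_self abs_ge_zero)
  then have "C * exp (\<omega> * t) \<le> \<bar>C\<bar> * exp (\<bar>\<omega>\<bar> * T)"
    by (smt (verit) abs_ge_self abs_ge_zero exp_gt_zero exp_le_cancel_iff mult_left_mono mult_right_mono)
  then show ?thesis
    using assms(1,2) by (meson mult_right_mono norm_ge_zero order_trans)
qed

locale volterra_system =
  fixes S :: "real \<Rightarrow> 'h::{real_inner,banach,second_countable_topology} \<Rightarrow> 'h"
    and K :: "real \<Rightarrow> real"
    and B :: "'u::{real_inner,banach,second_countable_topology} \<Rightarrow> 'h"
    and T M :: real
  assumes semigroup: "C0_semigroup S"
    and T_nonneg: "0 \<le> T"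
    and M_nonneg: "0 \<le> M"
    and S_bound: "\<And>t x. 0 \<le> t \<Longrightarrow> t \<le> T \<Longrightarrow> norm (S t x) \<le> M * norm x"
    and K_L2: "L2_on 0 T K"
    and B_bounded_linear: "bounded_linear B"
begin

lemma S_bounded_linear: "0 \<le> t \<Longrightarrow> bounded_linear (S t)"
  using semigroup unfolding C0_semigroup_def by blast

lemma S_linear: "0 \<le> t \<Longrightarrow> linear (S t)"
  using S_bounded_linear bounded_linear.linear by blast

lemma S_zero [simp]: "S 0 x = x"
  using semigroup unfolding C0_semigroup_def by simp

lemma S_S: "0 \<le> r \<Longrightarrow> 0 \<le> q \<Longrightarrow> S r (S q x) = S (r + q) x"
  using semigroup unfolding C0_semigroup_def by (metis comp_apply)

(* Clamping time to [0, T] makes S jointly continuous on all of real \<times> 'h; this is what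
   makes the convolutions s \<mapsto> S (t - s) (g s) measurable. *)
definition S_clamped :: "real \<Rightarrow> 'h \<Rightarrow> 'h" where
  "S_clamped r = S (max 0 (min T r))"

lemma S_clamped_continuous: "continuous_on UNIV (\<lambda>p. S_clamped (fst p) (snd p))"
proof -
  have S_clamped_bound: "norm (S_clamped r x) \<le> M * norm x" for r x
    unfolding S_clamped_def using T_nonneg by (intro S_bound) auto
  have "isCont (\<lambda>p. S_clamped (fst p) (snd p)) (r0, x0)" for r0 x0
  proof -
    have "continuous_on {0..} (\<lambda>t. S t x0)"
      using semigroup unfolding C0_semigroup_def by blast
    then have "continuous_on UNIV (\<lambda>r. S_clamped r x0)"
      unfolding S_clamped_def
      by (rule continuous_on_compose2) (auto intro!: continuous_intros)
    then have "isCont (\<lambda>r. S_clamped r x0) r0"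
      by (simp add: continuous_on_eq_continuous_at)
    moreover have "((\<lambda>p. fst p) \<longlongrightarrow> r0) (at (r0, x0))"
      using tendsto_fst[OF tendsto_ident_at[of "(r0, x0)" UNIV]] by simp
    ultimately have first: "((\<lambda>p. S_clamped (fst p) x0) \<longlongrightarrow> S_clamped r0 x0) (at (r0, x0))"
      by (rule isCont_tendsto_compose)
    have "((\<lambda>p. snd p - x0) \<longlongrightarrow> 0) (at (r0, x0))"
      using tendsto_diff[OF tendsto_snd[OF tendsto_ident_at[of "(r0, x0)" UNIV]] tendsto_const[of x0]]
      by simp
    then have "((\<lambda>p. M * norm (snd p - x0)) \<longlongrightarrow> 0) (at (r0, x0))"
      using tendsto_mult_right_zero tendsto_norm_zero by blast
    then have second: "((\<lambda>p. S_clamped (fst p) (snd p - x0)) \<longlongrightarrow> 0) (at (r0, x0))"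
      by (rule Lim_null_comparison[rotated]) (simp add: S_clamped_bound)
    have "S_clamped (fst p) x0 + S_clamped (fst p) (snd p - x0) = S_clamped (fst p) (snd p)" for p
      unfolding S_clamped_def by (simp add: linear_diff[OF S_linear])
    then show ?thesis
      using tendsto_add[OF first second] by (simp add: isCont_def)
  qed
  then show ?thesis
    by (simp add: continuous_on_eq_continuous_at)
qed

lemma set_integrable_S_convolution:
  assumes "a \<le> t" "t - a \<le> T"
    and meas: "set_borel_measurable lborel {a..t} g"
    and int: "set_integrable lborel {a..t} (\<lambda>s. norm (g s))"
  shows "set_integrable lborel {a..t} (\<lambda>s. S (t - s) (g s))"
proof (rule set_integrable_bound[of lborel "{a..t}" "\<lambda>s. M * norm (g s)"])
  show "set_integrable lborel {a..t} (\<lambda>s. M * norm (g s))"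
    using int by simp
  have "indicator {a..t} s *\<^sub>R S (t - s) (g s) = S_clamped (t - s) (indicator {a..t} s *\<^sub>R g s)" for s
  proof (cases "s \<in> {a..t}")
    case True
    then have "max 0 (min T (t - s)) = t - s"
      using assms(2) by auto
    then show ?thesis
      using True by (simp add: S_clamped_def)
  qed (simp add: S_clamped_def linear_0[OF S_linear])
  then have "(\<lambda>s. indicator {a..t} s *\<^sub>R S (t - s) (g s)) =
      (\<lambda>s. S_clamped (t - s) (indicator {a..t} s *\<^sub>R g s))"
    by (simp add: fun_eq_iff)
  moreover have "(\<lambda>s. S_clamped (t - s) (indicator {a..t} s *\<^sub>R g s)) \<in> borel_measurable lborel"
    by (rule borel_measurable_continuous_Pair[OF _ meas[unfolded set_borel_measurable_def]
        S_clamped_continuous]) simp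
  ultimately show "set_borel_measurable lborel {a..t} (\<lambda>s. S (t - s) (g s))"
    unfolding set_borel_measurable_def by simp
  show "AE s in lborel. s \<in> {a..t} \<longrightarrow> norm (S (t - s) (g s)) \<le> norm (M * norm (g s))"
    using assms(1,2) M_nonneg by (intro AE_I2 impI) (simp add: S_bound)
qed

definition K_norm_sq :: real where
  "K_norm_sq = (LINT t:{0..T}|lborel. (K t)\<^sup>2)"

lemma K_norm_sq_nonneg: "0 \<le> K_norm_sq"
  unfolding K_norm_sq_def set_lebesgue_integral_def
  by (rule Bochner_Integration.integral_nonneg) simp

lemma K_indicator_measurable: "(\<lambda>t. indicator {0..T} t * K t) \<in> borel_measurable borel"
  using K_L2 unfolding L2_on_Icc_iff set_borel_measurable_def by simp

lemma K_reflected: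
  assumes "c \<le> e" "0 \<le> s - e" "s - c \<le> T"
  shows "set_borel_measurable lborel {c..e} (\<lambda>\<sigma>. K (s - \<sigma>))"
    and "set_integrable lborel {c..e} (\<lambda>\<sigma>. (K (s - \<sigma>))\<^sup>2)"
    and "(LINT \<sigma>:{c..e}|lborel. (K (s - \<sigma>))\<^sup>2) \<le> K_norm_sq"
proof -
  define F where "F r = indicator {s - e..s - c} r *\<^sub>R (K r)\<^sup>2" for r
  have sub: "{s - e..s - c} \<subseteq> {0..T}"
    using assms by auto
  have K_sq: "set_integrable lborel {0..T} (\<lambda>t. (K t)\<^sup>2)"
    using K_L2 unfolding L2_on_Icc_iff by simp
  have F_int: "integrable lborel F"
    using set_integrable_subset[OF K_sq _ sub] unfolding F_def set_integrable_def by simp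
  have F_reflect: "F (s + (-1) * \<sigma>) = indicator {c..e} \<sigma> *\<^sub>R (K (s - \<sigma>))\<^sup>2" for \<sigma>
    unfolding F_def by (auto simp: indicator_def)
  have "integrable lborel (\<lambda>\<sigma>. F (s + (-1) * \<sigma>))"
    by (rule lborel_integrable_real_affine[OF F_int]) simp
  then show "set_integrable lborel {c..e} (\<lambda>\<sigma>. (K (s - \<sigma>))\<^sup>2)"
    unfolding set_integrable_def F_reflect .
  have "(LINT \<sigma>:{c..e}|lborel. (K (s - \<sigma>))\<^sup>2) = (\<integral>x. F x \<partial>lborel)"
    using lborel_integral_real_affine[of "-1" F s]
    unfolding set_lebesgue_integral_def F_reflect by simp
  also have "\<dots> \<le> (\<integral>x. indicator {0..T} x *\<^sub>R (K x)\<^sup>2 \<partial>lborel)"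
    using F_int K_sq sub unfolding F_def set_integrable_def
    by (intro integral_mono) (auto simp: indicator_def)
  finally show "(LINT \<sigma>:{c..e}|lborel. (K (s - \<sigma>))\<^sup>2) \<le> K_norm_sq"
    unfolding K_norm_sq_def set_lebesgue_integral_def .
  have "(\<lambda>\<sigma>. indicator {c..e} \<sigma> *\<^sub>R K (s - \<sigma>)) =
      (\<lambda>\<sigma>. indicator {c..e} \<sigma> * (indicator {0..T} (s - \<sigma>) * K (s - \<sigma>)))"
    using assms by (auto simp: indicator_def fun_eq_iff)
  moreover have "(\<lambda>\<sigma>. indicator {0..T} (s - \<sigma>) * K (s - \<sigma>)) \<in> borel_measurable borel"
    using measurable_compose[of "\<lambda>\<sigma>. s - \<sigma>" borel borel, OF _ K_indicator_measurable] by simp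
  ultimately show "set_borel_measurable lborel {c..e} (\<lambda>\<sigma>. K (s - \<sigma>))"
    unfolding set_borel_measurable_def by simp
qed

lemma kernel_integral_bound:
  assumes "c \<le> e" "0 \<le> s - e" "s - c \<le> T" and w: "L2_on c e w"
  shows "set_integrable lborel {c..e} (\<lambda>\<sigma>. K (s - \<sigma>) *\<^sub>R w \<sigma>)"
    and "norm (LINT \<sigma>:{c..e}|lborel. K (s - \<sigma>) *\<^sub>R w \<sigma>)
      \<le> sqrt K_norm_sq * sqrt (LINT \<sigma>:{c..e}|lborel. (norm (w \<sigma>))\<^sup>2)"
proof -
  note K = K_reflected[OF assms(1-3)]
  have w_meas: "set_borel_measurable lborel {c..e} w"
    and w_sq: "set_integrable lborel {c..e} (\<lambda>\<sigma>. (norm (w \<sigma>))\<^sup>2)"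
    using w unfolding L2_on_Icc_iff by auto
  have w_sq_nonneg: "0 \<le> (LINT \<sigma>:{c..e}|lborel. (norm (w \<sigma>))\<^sup>2)"
    unfolding set_lebesgue_integral_def by (rule Bochner_Integration.integral_nonneg) simp
  note CS = set_integral_scaleR_Cauchy_Schwarz[OF K(1) w_meas K(2) w_sq]
  show "set_integrable lborel {c..e} (\<lambda>\<sigma>. K (s - \<sigma>) *\<^sub>R w \<sigma>)"
    by (rule CS(1))
  have "norm (LINT \<sigma>:{c..e}|lborel. K (s - \<sigma>) *\<^sub>R w \<sigma>)
      \<le> sqrt (LINT \<sigma>:{c..e}|lborel. (K (s - \<sigma>))\<^sup>2) * sqrt (LINT \<sigma>:{c..e}|lborel. (norm (w \<sigma>))\<^sup>2)"
    by (rule CS(2))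
  also have "\<dots> \<le> sqrt K_norm_sq * sqrt (LINT \<sigma>:{c..e}|lborel. (norm (w \<sigma>))\<^sup>2)"
    using K(3) w_sq_nonneg by (intro mult_right_mono) simp_all
  finally show "norm (LINT \<sigma>:{c..e}|lborel. K (s - \<sigma>) *\<^sub>R w \<sigma>)
      \<le> sqrt K_norm_sq * sqrt (LINT \<sigma>:{c..e}|lborel. (norm (w \<sigma>))\<^sup>2)" .
qed

lemma kernel_integral_measurable:
  fixes w :: "real \<Rightarrow> 'h"
  assumes "0 \<le> c" and w: "set_borel_measurable lborel {c..e} w"
  shows "set_borel_measurable lborel {c..T} (\<lambda>s. LINT \<sigma>:{c..min s e}|lborel. K (s - \<sigma>) *\<^sub>R w \<sigma>)"
proof -
  define F where
    "F s \<sigma> = (if c \<le> \<sigma> \<and> \<sigma> \<le> min s e then indicator {0..T} (s - \<sigma>) * K (s - \<sigma>) else 0) *\<^sub>R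
      (indicator {c..e} \<sigma> *\<^sub>R w \<sigma>)" for s \<sigma>
  have [measurable]: "(\<lambda>\<sigma>. indicator {c..e} \<sigma> *\<^sub>R w \<sigma>) \<in> borel_measurable borel"
    using w unfolding set_borel_measurable_def by simp
  have [measurable]: "(\<lambda>t. indicator {0..T} t * K t) \<in> borel_measurable borel"
    by (rule K_indicator_measurable)
  have "(\<lambda>(s, \<sigma>). F s \<sigma>) \<in> borel_measurable (lborel \<Otimes>\<^sub>M lborel)"
    unfolding F_def by measurable
  then have F_meas: "(\<lambda>s. \<integral>\<sigma>. F s \<sigma> \<partial>lborel) \<in> borel_measurable lborel"
    using lborel.borel_measurable_lebesgue_integral[where f=F and N=lborel] by simp
  have "indicator {c..T} s *\<^sub>R (LINT \<sigma>:{c..min s e}|lborel. K (s - \<sigma>) *\<^sub>R w \<sigma>) =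
      indicator {c..T} s *\<^sub>R (\<integral>\<sigma>. F s \<sigma> \<partial>lborel)" for s
  proof (cases "s \<in> {c..T}")
    case True
    then have "indicator {c..min s e} \<sigma> *\<^sub>R (K (s - \<sigma>) *\<^sub>R w \<sigma>) = F s \<sigma>" for \<sigma>
      using assms(1) by (auto simp: F_def indicator_def)
    then show ?thesis
      unfolding set_lebesgue_integral_def by simp
  qed simp
  then have eq: "(\<lambda>s. indicator {c..T} s *\<^sub>R (LINT \<sigma>:{c..min s e}|lborel. K (s - \<sigma>) *\<^sub>R w \<sigma>)) =
      (\<lambda>s. indicator {c..T} s *\<^sub>R (\<integral>\<sigma>. F s \<sigma> \<partial>lborel))"
    by (simp add: fun_eq_iff)
  have "(indicator {c..T} :: real \<Rightarrow> real) \<in> borel_measurable lborel"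
    by simp
  then show ?thesis
    unfolding set_borel_measurable_def eq by (rule borel_measurable_scaleR[OF _ F_meas])
qed

definition memory :: "real \<Rightarrow> (real \<Rightarrow> 'h) \<Rightarrow> real \<Rightarrow> 'h" where
  "memory a w s = (LINT \<sigma>:{a..s}|lborel. K (s - \<sigma>) *\<^sub>R w \<sigma>)"

definition history :: "real \<Rightarrow> (real \<Rightarrow> 'h) \<Rightarrow> real \<Rightarrow> 'h" where
  "history a h s = (LINT \<sigma>:{0..a}|lborel. K (s - \<sigma>) *\<^sub>R h \<sigma>)"

definition mild_rhs :: "real \<Rightarrow> 'h \<Rightarrow> (real \<Rightarrow> 'h) \<Rightarrow> (real \<Rightarrow> 'u) \<Rightarrow> (real \<Rightarrow> 'h) \<Rightarrow> real \<Rightarrow> 'h"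
  where "mild_rhs a x0 h u w t = S (t - a) x0
      + (LINT s:{a..t}|lborel. S (t - s) (memory a w s))
      + (LINT s:{a..t}|lborel. S (t - s) (history a h s))
      + (LINT s:{a..t}|lborel. S (t - s) (B (u s)))"

lemma mild_solution_iff:
  "mild_solution S K B a T x0 h u w \<longleftrightarrow> L2_on a T w \<and> (\<forall>t\<in>{a..T}. w t = mild_rhs a x0 h u w t)"
  unfolding mild_solution_def mild_rhs_def memory_def history_def by simp

lemma memory_bound:
  assumes "0 \<le> a" "a \<le> s" "s \<le> t" "t \<le> T" and w: "L2_on a t w"
  shows "set_integrable lborel {a..s} (\<lambda>\<sigma>. K (s - \<sigma>) *\<^sub>R w \<sigma>)"
    and "norm (memory a w s) \<le> sqrt K_norm_sq * sqrt (LINT \<sigma>:{a..t}|lborel. (norm (w \<sigma>))\<^sup>2)"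
proof -
  note bound = kernel_integral_bound[of a s s w]
  have ws: "L2_on a s w"
    using L2_on_subinterval[OF w] assms(3) by simp
  show "set_integrable lborel {a..s} (\<lambda>\<sigma>. K (s - \<sigma>) *\<^sub>R w \<sigma>)"
    using bound(1) ws assms by simp
  have w_sq: "set_integrable lborel {a..t} (\<lambda>\<sigma>. (norm (w \<sigma>))\<^sup>2)"
    using w unfolding L2_on_Icc_iff by simp
  have "(LINT \<sigma>:{a..s}|lborel. (norm (w \<sigma>))\<^sup>2) \<le> (LINT \<sigma>:{a..t}|lborel. (norm (w \<sigma>))\<^sup>2)"
    using set_integral_Icc_split[OF w_sq assms(2,3)]
      Bochner_Integration.integral_nonneg[of lborel "\<lambda>\<sigma>. indicator {s..t} \<sigma> * (norm (w \<sigma>))\<^sup>2"]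
    by (simp add: set_lebesgue_integral_def)
  then show "norm (memory a w s) \<le> sqrt K_norm_sq * sqrt (LINT \<sigma>:{a..t}|lborel. (norm (w \<sigma>))\<^sup>2)"
    unfolding memory_def using bound(2) ws assms K_norm_sq_nonneg
    by (smt (verit) mult_left_mono real_sqrt_le_mono real_sqrt_ge_zero)
qed

lemma memory_measurable:
  assumes "0 \<le> a" "t \<le> T" "L2_on a t w"
  shows "set_borel_measurable lborel {a..t} (memory a w)"
proof -
  have "set_borel_measurable lborel {a..T} (\<lambda>s. LINT \<sigma>:{a..min s t}|lborel. K (s - \<sigma>) *\<^sub>R w \<sigma>)"
    using assms by (intro kernel_integral_measurable) (simp_all add: L2_on_Icc_iff)
  then have "set_borel_measurable lborel {a..t} (\<lambda>s. LINT \<sigma>:{a..min s t}|lborel. K (s - \<sigma>) *\<^sub>R w \<sigma>)"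
    by (rule set_borel_measurable_subset) (use assms in auto)
  then show ?thesis
    unfolding set_borel_measurable_def memory_def
    by (rule back_subst[of "\<lambda>f. f \<in> _"]) (auto simp: fun_eq_iff indicator_def min_absorb1)
qed

lemma history_bound:
  assumes "0 \<le> a" "a \<le> s" "s \<le> T" and h: "L2_on 0 a h"
  shows "set_integrable lborel {0..a} (\<lambda>\<sigma>. K (s - \<sigma>) *\<^sub>R h \<sigma>)"
    and "norm (history a h s) \<le> sqrt K_norm_sq * sqrt (LINT \<sigma>:{0..a}|lborel. (norm (h \<sigma>))\<^sup>2)"
  using kernel_integral_bound[of 0 a s h] assms unfolding history_def by simp_all

lemma history_measurable:
  assumes "0 \<le> a" "t \<le> T" "L2_on 0 a h"
  shows "set_borel_measurable lborel {a..t} (history a h)"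
proof -
  have "set_borel_measurable lborel {0..T} (\<lambda>s. LINT \<sigma>:{0..min s a}|lborel. K (s - \<sigma>) *\<^sub>R h \<sigma>)"
    using assms by (intro kernel_integral_measurable) (simp_all add: L2_on_Icc_iff)
  then have "set_borel_measurable lborel {a..t} (\<lambda>s. LINT \<sigma>:{0..min s a}|lborel. K (s - \<sigma>) *\<^sub>R h \<sigma>)"
    by (rule set_borel_measurable_subset) (use assms in auto)
  then show ?thesis
    unfolding set_borel_measurable_def history_def
    by (rule back_subst[of "\<lambda>f. f \<in> _"]) (auto simp: fun_eq_iff indicator_def min_absorb2)
qed

lemma control_term_integrable:
  assumes "0 \<le> a" "a \<le> t" "t \<le> T" "L2_on a t u"
  shows "set_integrable lborel {a..t} (\<lambda>s. S (t - s) (B (u s)))"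
proof -
  have "set_integrable lborel {a..t} (\<lambda>s. B (u s))"
    using set_integral_bounded_linear(1)[OF B_bounded_linear L2_on_imp_set_integrable(2)[OF assms(4)]] .
  moreover have "set_borel_measurable lborel {a..t} (\<lambda>s. B (u s))"
    using set_borel_measurable_bounded_linear[OF B_bounded_linear] assms(4)
    unfolding L2_on_Icc_iff by blast
  ultimately show ?thesis
    using assms by (intro set_integrable_S_convolution set_integrable_norm) auto
qed

lemma memory_term_integrable:
  assumes "0 \<le> a" "a \<le> t" "t \<le> T" "L2_on a t w"
  shows "set_integrable lborel {a..t} (\<lambda>s. S (t - s) (memory a w s))"
  using assms memory_measurable[of a t w] memory_bound(2)[of a _ t w]
  by (intro set_integrable_S_convolution set_borel_measurable_norm(1)
        set_integrable_Icc_bounded[where C="sqrt K_norm_sq * sqrt (LINT \<sigma>:{a..t}|lborel. (norm (w \<sigma>))\<^sup>2)"])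
     auto

lemma history_term_integrable:
  assumes "0 \<le> a" "a \<le> t" "t \<le> T" "L2_on 0 a h"
  shows "set_integrable lborel {a..t} (\<lambda>s. S (t - s) (history a h s))"
  using assms history_measurable[of a t h] history_bound(2)[of a _ h]
  by (intro set_integrable_S_convolution set_borel_measurable_norm(1)
        set_integrable_Icc_bounded[where C="sqrt K_norm_sq * sqrt (LINT \<sigma>:{0..a}|lborel. (norm (h \<sigma>))\<^sup>2)"])
     auto

definition forcing :: "real \<Rightarrow> (real \<Rightarrow> 'h) \<Rightarrow> (real \<Rightarrow> 'u) \<Rightarrow> (real \<Rightarrow> 'h) \<Rightarrow> real \<Rightarrow> 'h" where
  "forcing a h u w s = memory a w s + history a h s + B (u s)"

lemma mild_rhs_eq:
  assumes "0 \<le> a" "a \<le> t" "t \<le> T" "L2_on a t w" "L2_on 0 a h" "L2_on a t u"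
  shows "set_integrable lborel {a..t} (\<lambda>s. S (t - s) (forcing a h u w s))"
    and "mild_rhs a x0 h u w t = S (t - a) x0 + (LINT s:{a..t}|lborel. S (t - s) (forcing a h u w s))"
proof -
  note int = memory_term_integrable[OF assms(1-4)] history_term_integrable[OF assms(1-3,5)]
    control_term_integrable[OF assms(1-3,6)]
  have split: "S (t - s) (forcing a h u w s) =
      S (t - s) (memory a w s) + S (t - s) (history a h s) + S (t - s) (B (u s))" if "s \<in> {a..t}" for s
    using that S_linear[of "t - s"] by (simp add: forcing_def linear_add)
  show "set_integrable lborel {a..t} (\<lambda>s. S (t - s) (forcing a h u w s))"
    using set_integral_add(1)[OF set_integral_add(1)[OF int(1,2)] int(3)]
    by (rule set_integrable_cong[THEN iffD1, rotated -1]) (simp_all add: split)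
  have "(LINT s:{a..t}|lborel. S (t - s) (forcing a h u w s)) =
      (LINT s:{a..t}|lborel. S (t - s) (memory a w s) + S (t - s) (history a h s) + S (t - s) (B (u s)))"
    by (rule set_lebesgue_integral_cong) (simp_all add: split)
  also have "\<dots> = (LINT s:{a..t}|lborel. S (t - s) (memory a w s))
      + (LINT s:{a..t}|lborel. S (t - s) (history a h s)) + (LINT s:{a..t}|lborel. S (t - s) (B (u s)))"
    using int by (simp add: set_integral_add)
  finally show "mild_rhs a x0 h u w t = S (t - a) x0 + (LINT s:{a..t}|lborel. S (t - s) (forcing a h u w s))"
    unfolding mild_rhs_def by (simp add: add.assoc)
qed

lemma mild_rhs_at_start: "mild_rhs a x0 h u w a = x0"
  unfolding mild_rhs_def by (simp add: set_integral_singleton_lborel)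

lemma mild_rhs_cong:
  assumes "0 \<le> a" "a \<le> t" "t \<le> T" and u: "L2_on a t u" and u': "L2_on a t u'"
    and w_eq: "\<And>s. s \<in> {a..t} \<Longrightarrow> w s = w' s" and h_eq: "\<And>s. s \<in> {0..a} \<Longrightarrow> h s = h' s"
    and u_eq: "AE s in lborel. s \<in> {a..t} \<longrightarrow> u s = u' s"
  shows "mild_rhs a x0 h u w t = mild_rhs a x0 h' u' w' t"
proof -
  have "memory a w s = memory a w' s" if "s \<in> {a..t}" for s
    unfolding memory_def by (rule set_lebesgue_integral_cong) (use that w_eq in auto)
  then have memory_eq: "(LINT s:{a..t}|lborel. S (t - s) (memory a w s)) =
      (LINT s:{a..t}|lborel. S (t - s) (memory a w' s))"
    by (intro set_lebesgue_integral_cong) auto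
  have "history a h = history a h'"
    unfolding history_def fun_eq_iff by (intro allI set_lebesgue_integral_cong) (use h_eq in auto)
  moreover have "(LINT s:{a..t}|lborel. S (t - s) (B (u s))) = (LINT s:{a..t}|lborel. S (t - s) (B (u' s)))"
    unfolding set_lebesgue_integral_def
  proof (rule integral_cong_AE)
    show "(\<lambda>s. indicator {a..t} s *\<^sub>R S (t - s) (B (u s))) \<in> borel_measurable lborel"
      "(\<lambda>s. indicator {a..t} s *\<^sub>R S (t - s) (B (u' s))) \<in> borel_measurable lborel"
      using control_term_integrable[OF assms(1-3) u] control_term_integrable[OF assms(1-3) u']
      unfolding set_integrable_def by (simp_all add: borel_measurable_integrable)
    show "AE s in lborel. indicator {a..t} s *\<^sub>R S (t - s) (B (u s)) =
        indicator {a..t} s *\<^sub>R S (t - s) (B (u' s))"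
      using u_eq by eventually_elim (auto simp: indicator_def)
  qed
  ultimately show ?thesis
    unfolding mild_rhs_def memory_eq by simp
qed

lemma forcing_restart:
  assumes "0 \<le> a" "a \<le> a1" "a1 \<le> s" "s \<le> T" and w: "L2_on a s w" and h: "L2_on 0 a h"
  shows "forcing a1 (\<lambda>\<sigma>. if \<sigma> \<le> a then h \<sigma> else w \<sigma>) u w s = forcing a h u w s"
proof -
  define y where "y \<sigma> = (if \<sigma> \<le> a then h \<sigma> else w \<sigma>)" for \<sigma>
  have y: "L2_on 0 a1 y"
    unfolding y_def using assms L2_on_subinterval[OF w, of a a1] by (intro L2_on_join[OF h]) auto
  have "memory a w s = (LINT \<sigma>:{a..a1}|lborel. K (s - \<sigma>) *\<^sub>R w \<sigma>) + memory a1 w s"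
    unfolding memory_def using assms memory_bound(1)[OF _ _ _ _ w, of s]
    by (intro set_integral_Icc_split) auto
  moreover have "history a1 y s =
      (LINT \<sigma>:{0..a}|lborel. K (s - \<sigma>) *\<^sub>R y \<sigma>) + (LINT \<sigma>:{a..a1}|lborel. K (s - \<sigma>) *\<^sub>R y \<sigma>)"
    unfolding history_def using assms history_bound(1)[OF _ _ _ y, of s]
    by (intro set_integral_Icc_split) auto
  moreover have "(LINT \<sigma>:{0..a}|lborel. K (s - \<sigma>) *\<^sub>R y \<sigma>) = history a h s"
    unfolding history_def y_def by (rule set_lebesgue_integral_cong) auto
  moreover have "(LINT \<sigma>:{a..a1}|lborel. K (s - \<sigma>) *\<^sub>R y \<sigma>) = (LINT \<sigma>:{a<..a1}|lborel. K (s - \<sigma>) *\<^sub>R y \<sigma>)"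
    and "(LINT \<sigma>:{a<..a1}|lborel. K (s - \<sigma>) *\<^sub>R w \<sigma>) = (LINT \<sigma>:{a..a1}|lborel. K (s - \<sigma>) *\<^sub>R w \<sigma>)"
    by (rule set_integral_discrete_difference[where X="{a}"]; auto)+
  moreover have "(LINT \<sigma>:{a<..a1}|lborel. K (s - \<sigma>) *\<^sub>R y \<sigma>) = (LINT \<sigma>:{a<..a1}|lborel. K (s - \<sigma>) *\<^sub>R w \<sigma>)"
    unfolding y_def by (rule set_lebesgue_integral_cong) auto
  ultimately show ?thesis
    unfolding forcing_def y_def[symmetric] by (simp add: algebra_simps)
qed

lemma mild_rhs_restart:
  assumes "0 \<le> a" "a \<le> a1" "a1 \<le> t" "t \<le> T"
    and w: "L2_on a t w" and h: "L2_on 0 a h" and u: "L2_on a t u"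
    and w_a1: "w a1 = mild_rhs a x0 h u w a1"
  shows "mild_rhs a1 (w a1) (\<lambda>s. if s \<le> a then h s else w s) u w t = mild_rhs a x0 h u w t"
proof -
  define y where "y s = (if s \<le> a then h s else w s)" for s
  define F where "F = forcing a h u w"
  have y: "L2_on 0 a1 y"
    unfolding y_def using assms L2_on_subinterval[OF w, of a a1] by (intro L2_on_join[OF h]) auto
  note restricted = L2_on_subinterval[OF w, of a a1] L2_on_subinterval[OF u, of a a1]
    L2_on_subinterval[OF w, of a1 t] L2_on_subinterval[OF u, of a1 t]
  have int_t: "set_integrable lborel {a..t} (\<lambda>s. S (t - s) (F s))"
    and rhs_t: "mild_rhs a x0 h u w t = S (t - a) x0 + (LINT s:{a..t}|lborel. S (t - s) (F s))"
    unfolding F_def using mild_rhs_eq[OF _ _ _ w h u] assms by auto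
  have int_a1: "set_integrable lborel {a..a1} (\<lambda>s. S (a1 - s) (F s))"
    and w_a1_eq: "w a1 = S (a1 - a) x0 + (LINT s:{a..a1}|lborel. S (a1 - s) (F s))"
    unfolding F_def w_a1 using mild_rhs_eq(1)[of a a1 w h u] mild_rhs_eq(2)[of a a1 w h u x0]
      restricted assms h by auto
  have S_lin: "bounded_linear (S (t - a1))"
    using assms by (intro S_bounded_linear) simp
  have "S (t - a1) (w a1) = S (t - a1) (S (a1 - a) x0) + S (t - a1) (LINT s:{a..a1}|lborel. S (a1 - s) (F s))"
    unfolding w_a1_eq using bounded_linear.linear[OF S_lin] by (simp add: linear_add)
  also have "S (t - a1) (S (a1 - a) x0) = S (t - a) x0"
    using S_S[of "t - a1" "a1 - a" x0] assms by simp
  also have "S (t - a1) (LINT s:{a..a1}|lborel. S (a1 - s) (F s)) =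
      (LINT s:{a..a1}|lborel. S (t - a1) (S (a1 - s) (F s)))"
    by (rule set_integral_bounded_linear(2)[OF S_lin int_a1, symmetric])
  also have "\<dots> = (LINT s:{a..a1}|lborel. S (t - s) (F s))"
    using assms by (intro set_lebesgue_integral_cong) (auto simp: S_S)
  finally have S_w_a1: "S (t - a1) (w a1) = S (t - a) x0 + (LINT s:{a..a1}|lborel. S (t - s) (F s))" .
  have forcing_eq: "forcing a1 y u w s = F s" if "s \<in> {a1..t}" for s
    unfolding y_def F_def using that assms L2_on_subinterval[OF w, of a s]
    by (intro forcing_restart[OF _ _ _ _ _ h]) auto
  have "mild_rhs a1 (w a1) y u w t = S (t - a1) (w a1) + (LINT s:{a1..t}|lborel. S (t - s) (forcing a1 y u w s))"
    using mild_rhs_eq(2)[of a1 t w y u] restricted y assms by auto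
  also have "(LINT s:{a1..t}|lborel. S (t - s) (forcing a1 y u w s)) = (LINT s:{a1..t}|lborel. S (t - s) (F s))"
    by (rule set_lebesgue_integral_cong) (auto simp: forcing_eq)
  also have "S (t - a1) (w a1) + \<dots> = mild_rhs a x0 h u w t"
    unfolding S_w_a1 rhs_t using set_integral_Icc_split[OF int_t assms(2,3)] by (simp add: add.assoc)
  finally show ?thesis
    unfolding y_def .
qed

lemma mild_rhs_lincomb:
  assumes "0 \<le> a" "a \<le> t" "t \<le> T"
    and w: "L2_on a t w" "L2_on a t w'" and h: "L2_on 0 a h" "L2_on 0 a h'"
    and u: "L2_on a t u" "L2_on a t u'"
  shows "mild_rhs a (p *\<^sub>R x0 + q *\<^sub>R y0) (\<lambda>s. p *\<^sub>R h s + q *\<^sub>R h' s)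
      (\<lambda>s. p *\<^sub>R u s + q *\<^sub>R u' s) (\<lambda>s. p *\<^sub>R w s + q *\<^sub>R w' s) t =
    p *\<^sub>R mild_rhs a x0 h u w t + q *\<^sub>R mild_rhs a y0 h' u' w' t"
proof -
  have kernel_lincomb: "(LINT \<sigma>:A|lborel. K (s - \<sigma>) *\<^sub>R (p *\<^sub>R v \<sigma> + q *\<^sub>R v' \<sigma>)) =
      p *\<^sub>R (LINT \<sigma>:A|lborel. K (s - \<sigma>) *\<^sub>R v \<sigma>) + q *\<^sub>R (LINT \<sigma>:A|lborel. K (s - \<sigma>) *\<^sub>R v' \<sigma>)"
    if "set_integrable lborel A (\<lambda>\<sigma>. K (s - \<sigma>) *\<^sub>R v \<sigma>)"
      "set_integrable lborel A (\<lambda>\<sigma>. K (s - \<sigma>) *\<^sub>R v' \<sigma>)"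
    for A s and v v' :: "real \<Rightarrow> 'h"
    using set_integral_lincomb(2)[OF that, of p q]
    by (simp add: scaleR_add_right scaleR_left_commute mult.commute)
  have forcing_lincomb: "forcing a (\<lambda>s. p *\<^sub>R h s + q *\<^sub>R h' s) (\<lambda>s. p *\<^sub>R u s + q *\<^sub>R u' s)
      (\<lambda>s. p *\<^sub>R w s + q *\<^sub>R w' s) s = p *\<^sub>R forcing a h u w s + q *\<^sub>R forcing a h' u' w' s"
    if "s \<in> {a..t}" for s
    using that assms kernel_lincomb[OF memory_bound(1)[OF _ _ _ _ w(1)] memory_bound(1)[OF _ _ _ _ w(2)]]
      kernel_lincomb[OF history_bound(1)[OF _ _ _ h(1)] history_bound(1)[OF _ _ _ h(2)]]
      linear_add[OF bounded_linear.linear[OF B_bounded_linear]]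
      linear_scale[OF bounded_linear.linear[OF B_bounded_linear]]
    by (simp add: forcing_def memory_def history_def algebra_simps)
  note F = mild_rhs_eq[OF assms(1-3) w(1) h(1) u(1)] mild_rhs_eq[OF assms(1-3) w(2) h(2) u(2)]
  note F_lincomb = mild_rhs_eq(2)[OF assms(1-3) L2_on_lincomb[OF w] L2_on_lincomb[OF h] L2_on_lincomb[OF u]]
  have "(LINT s:{a..t}|lborel. S (t - s) (forcing a (\<lambda>s. p *\<^sub>R h s + q *\<^sub>R h' s)
        (\<lambda>s. p *\<^sub>R u s + q *\<^sub>R u' s) (\<lambda>s. p *\<^sub>R w s + q *\<^sub>R w' s) s)) =
      (LINT s:{a..t}|lborel. p *\<^sub>R S (t - s) (forcing a h u w s) + q *\<^sub>R S (t - s) (forcing a h' u' w' s))"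
    using S_linear by (intro set_lebesgue_integral_cong) (auto simp: forcing_lincomb linear_add linear_scale)
  also have "\<dots> = p *\<^sub>R (LINT s:{a..t}|lborel. S (t - s) (forcing a h u w s)) +
      q *\<^sub>R (LINT s:{a..t}|lborel. S (t - s) (forcing a h' u' w' s))"
    using F(1,3) by (rule set_integral_lincomb(2))
  finally show ?thesis
    unfolding F_lincomb F(2) F(4) using S_linear[of "t - a"] assms(2)
    by (simp add: linear_add linear_scale algebra_simps)
qed

lemma mild_solution_cong:
  assumes "mild_solution S K B a T x0 h u w" "0 \<le> a" "L2_on a T u" "L2_on a T u'"
    and "\<And>s. s \<in> {0..a} \<Longrightarrow> h s = h' s" and "AE s in lborel. s \<in> {a..T} \<longrightarrow> u s = u' s"
  shows "mild_solution S K B a T x0 h' u' w"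
proof -
  have "mild_rhs a x0 h u w t = mild_rhs a x0 h' u' w t" if "t \<in> {a..T}" for t
    using that assms(2,5,6) L2_on_subinterval[OF assms(3), of a t] L2_on_subinterval[OF assms(4), of a t]
    by (intro mild_rhs_cong) (auto elim!: eventually_mono)
  then show ?thesis
    using assms(1) unfolding mild_solution_iff by simp
qed

lemma mild_solution_restrict:
  assumes w: "mild_solution S K B a T x0 h u w" and h: "L2_on 0 a h" and u: "L2_on a T u"
    and "0 \<le> a" "a \<le> a1" "a1 \<le> T"
  shows "mild_solution S K B a1 T (w a1) (\<lambda>s. if s \<le> a then h s else w s) u w"
  unfolding mild_solution_iff
proof
  have w_L2: "L2_on a T w" and w_eq: "\<forall>t\<in>{a..T}. w t = mild_rhs a x0 h u w t"
    using w unfolding mild_solution_iff by auto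
  then show "L2_on a1 T w"
    using assms L2_on_subinterval[of a T w a1 T] by simp
  show "\<forall>t\<in>{a1..T}. w t = mild_rhs a1 (w a1) (\<lambda>s. if s \<le> a then h s else w s) u w t"
  proof
    fix t
    assume t: "t \<in> {a1..T}"
    then have "w t = mild_rhs a x0 h u w t"
      using w_eq assms by auto
    also have "\<dots> = mild_rhs a1 (w a1) (\<lambda>s. if s \<le> a then h s else w s) u w t"
      using t assms w_eq L2_on_subinterval[OF w_L2, of a t] L2_on_subinterval[OF u, of a t]
      by (intro mild_rhs_restart[symmetric, OF _ _ _ _ _ h]) auto
    finally show "w t = mild_rhs a1 (w a1) (\<lambda>s. if s \<le> a then h s else w s) u w t" .
  qed
qed

lemma mild_solution_join:
  assumes w: "mild_solution S K B a T x0 h u w"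
    and w1: "mild_solution S K B a1 T (w a1) (\<lambda>s. if s \<le> a then h s else w s) u1 w1"
    and h: "L2_on 0 a h" and u: "L2_on a T u" and u1: "L2_on a1 T u1"
    and "0 \<le> a" "a \<le> a1" "a1 \<le> T"
  shows "mild_solution S K B a T x0 h (\<lambda>s. if s \<le> a1 then u s else u1 s) (\<lambda>s. if s \<le> a1 then w s else w1 s)"
proof -
  define z where "z s = (if s \<le> a1 then w s else w1 s)" for s
  define v where "v s = (if s \<le> a1 then u s else u1 s)" for s
  have w_L2: "L2_on a T w" and w_eq: "\<forall>t\<in>{a..T}. w t = mild_rhs a x0 h u w t"
    using w unfolding mild_solution_iff by auto
  have w1_L2: "L2_on a1 T w1"
    and w1_eq: "\<forall>t\<in>{a1..T}. w1 t = mild_rhs a1 (w a1) (\<lambda>s. if s \<le> a then h s else w s) u1 w1 t"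
    using w1 unfolding mild_solution_iff by auto
  have z: "L2_on a T z" and v: "L2_on a T v"
    unfolding z_def v_def using assms L2_on_subinterval[OF w_L2, of a a1] L2_on_subinterval[OF u, of a a1]
    by (auto intro!: L2_on_join w1_L2 u1)
  have w1_a1: "w1 a1 = w a1"
    using w1_eq assms by (auto simp: mild_rhs_at_start)
  have on_first: "z t = mild_rhs a x0 h v z t" if t: "t \<in> {a..a1}" for t
  proof -
    have "z t = mild_rhs a x0 h u w t"
      using t w_eq assms by (auto simp: z_def)
    also have "\<dots> = mild_rhs a x0 h v z t"
      using t assms L2_on_subinterval[OF u, of a t] L2_on_subinterval[OF v, of a t]
      by (intro mild_rhs_cong) (auto simp: z_def v_def)
    finally show ?thesis .
  qed
  have z_a1: "z a1 = w a1"
    by (simp add: z_def)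
  have on_second: "z t = mild_rhs a x0 h v z t" if t: "t \<in> {a1<..T}" for t
  proof -
    have "z t = mild_rhs a1 (w a1) (\<lambda>s. if s \<le> a then h s else w s) u1 w1 t"
      using t w1_eq by (auto simp: z_def)
    \<comment> \<open>\<open>v\<close> differs from \<open>u1\<close> at \<open>a1\<close> only\<close>
    also have "\<dots> = mild_rhs a1 (z a1) (\<lambda>s. if s \<le> a then h s else z s) v z t"
      unfolding z_a1 using t assms w1_a1 L2_on_subinterval[OF u1, of a1 t] L2_on_subinterval[OF v, of a1 t]
        AE_lborel_singleton[of a1]
      by (intro mild_rhs_cong) (auto simp: z_def v_def elim!: eventually_mono)
    also have "\<dots> = mild_rhs a x0 h v z t"
      using t assms on_first[of a1] L2_on_subinterval[OF z, of a t] L2_on_subinterval[OF v, of a t]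
      by (intro mild_rhs_restart[OF _ _ _ _ _ h]) auto
    finally show ?thesis .
  qed
  show ?thesis
    unfolding mild_solution_iff z_def[symmetric] v_def[symmetric]
    using z on_first on_second by (metis atLeastAtMost_iff greaterThanAtMost_iff not_le)
qed

lemma mild_solution_lincomb:
  assumes w: "mild_solution S K B a T x0 h u w" and w': "mild_solution S K B a T y0 h' u' w'"
    and "0 \<le> a" "L2_on 0 a h" "L2_on 0 a h'" "L2_on a T u" "L2_on a T u'"
  shows "mild_solution S K B a T (p *\<^sub>R x0 + q *\<^sub>R y0) (\<lambda>s. p *\<^sub>R h s + q *\<^sub>R h' s)
      (\<lambda>s. p *\<^sub>R u s + q *\<^sub>R u' s) (\<lambda>s. p *\<^sub>R w s + q *\<^sub>R w' s)"
proof -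
  have w_L2: "L2_on a T w" "L2_on a T w'"
    and w_eq: "\<forall>t\<in>{a..T}. w t = mild_rhs a x0 h u w t" "\<forall>t\<in>{a..T}. w' t = mild_rhs a y0 h' u' w' t"
    using w w' unfolding mild_solution_iff by auto
  have "p *\<^sub>R w t + q *\<^sub>R w' t = mild_rhs a (p *\<^sub>R x0 + q *\<^sub>R y0) (\<lambda>s. p *\<^sub>R h s + q *\<^sub>R h' s)
      (\<lambda>s. p *\<^sub>R u s + q *\<^sub>R u' s) (\<lambda>s. p *\<^sub>R w s + q *\<^sub>R w' s) t" if "t \<in> {a..T}" for t
    using that w_eq assms(3-7) L2_on_subinterval[OF w_L2(1), of a t] L2_on_subinterval[OF w_L2(2), of a t]
      L2_on_subinterval[OF assms(6), of a t] L2_on_subinterval[OF assms(7), of a t]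
    by (subst mild_rhs_lincomb) auto
  then show ?thesis
    unfolding mild_solution_iff using L2_on_lincomb[OF w_L2] by simp
qed

lemma mild_rhs_homogeneous:
  assumes "a \<le> t"
  shows "mild_rhs a 0 (\<lambda>_. 0) (\<lambda>_. 0) w t = (LINT s:{a..t}|lborel. S (t - s) (memory a w s))"
proof -
  have "(LINT s:{a..t}|lborel. S (t - s) 0) = 0"
    using linear_0[OF S_linear] by (subst set_lebesgue_integral_cong[where g="\<lambda>_. 0"]) auto
  moreover have "S (t - a) 0 = 0" "B 0 = 0"
    using assms linear_0[OF S_linear] linear_0[OF bounded_linear.linear[OF B_bounded_linear]] by auto
  ultimately show ?thesis
    unfolding mild_rhs_def history_def by simp
qed

lemma homogeneous_solution_bound:
  assumes d: "mild_solution S K B b T 0 (\<lambda>_. 0) (\<lambda>_. 0) d" and "0 \<le> b" "b \<le> t" "t \<le> e" "e \<le> T"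
  shows "norm (d t) \<le> M * sqrt K_norm_sq * sqrt (LINT \<sigma>:{b..e}|lborel. (norm (d \<sigma>))\<^sup>2) * (t - b)"
proof -
  define C where "C = M * sqrt K_norm_sq * sqrt (LINT \<sigma>:{b..e}|lborel. (norm (d \<sigma>))\<^sup>2)"
  have d_L2: "L2_on b e d" and d_eq: "d t = mild_rhs b 0 (\<lambda>_. 0) (\<lambda>_. 0) d t"
    using d assms L2_on_subinterval[of b T d b e] unfolding mild_solution_iff by auto
  have int: "set_integrable lborel {b..t} (\<lambda>s. S (t - s) (memory b d s))"
    using assms L2_on_subinterval[OF d_L2, of b t] by (intro memory_term_integrable) auto
  have "norm (d t) = norm (LINT s:{b..t}|lborel. S (t - s) (memory b d s))"
    using assms d_eq mild_rhs_homogeneous[of b t d] by simp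
  also have "\<dots> \<le> (LINT s:{b..t}|lborel. norm (S (t - s) (memory b d s)))"
    by (rule set_integral_norm_bound[OF int])
  also have "\<dots> \<le> (LINT s:{b..t}|lborel. C)"
  proof (rule set_integral_mono[OF set_integrable_norm[OF int]])
    show "set_integrable lborel {b..t} (\<lambda>_. C)"
      by (rule set_integrable_Icc_bounded[where C="\<bar>C\<bar>"]) (auto simp: set_borel_measurable_def)
    fix s
    assume s: "s \<in> {b..t}"
    then have "norm (S (t - s) (memory b d s)) \<le> M * norm (memory b d s)"
      using assms by (intro S_bound) auto
    also have "\<dots> \<le> C"
      unfolding C_def using s assms M_nonneg memory_bound(2)[OF _ _ _ _ d_L2, of s]
      by (simp add: mult.assoc mult_left_mono)
    finally show "norm (S (t - s) (memory b d s)) \<le> C" .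
  qed
  also have "\<dots> = C * (t - b)"
    using assms by (simp add: set_integral_const emeasure_lborel_Icc_eq)
  finally show ?thesis
    unfolding C_def .
qed

(* With N the integral of |d|\<^sup>2 over [b, e], the pointwise bound gives
   N \<le> M\<^sup>2 * K_norm_sq * (e - b)\<^sup>3 * N, which forces N = 0 on short intervals. *)
lemma mild_solution_homogeneous_short:
  assumes d: "mild_solution S K B b T 0 (\<lambda>_. 0) (\<lambda>_. 0) d"
    and "0 \<le> b" "b \<le> e" "e \<le> T" and small: "M\<^sup>2 * K_norm_sq * (e - b) ^ 3 < 1"
  shows "\<forall>t\<in>{b..e}. d t = 0"
proof -
  define N where "N = (LINT \<sigma>:{b..e}|lborel. (norm (d \<sigma>))\<^sup>2)"
  define C where "C = M * sqrt K_norm_sq * sqrt N"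
  have N_nonneg: "0 \<le> N"
    unfolding N_def set_lebesgue_integral_def by (rule Bochner_Integration.integral_nonneg) simp
  then have C_nonneg: "0 \<le> C"
    unfolding C_def using M_nonneg K_norm_sq_nonneg by simp
  have bound: "norm (d t) \<le> C * (e - b)" if "t \<in> {b..e}" for t
  proof -
    have "norm (d t) \<le> C * (t - b)"
      unfolding C_def N_def using that assms by (intro homogeneous_solution_bound[OF d]) auto
    also have "\<dots> \<le> C * (e - b)"
      using that C_nonneg by (intro mult_left_mono) auto
    finally show ?thesis .
  qed
  have "N \<le> (LINT \<sigma>:{b..e}|lborel. (C * (e - b))\<^sup>2)"
    unfolding N_def
  proof (rule set_integral_mono)
    show "set_integrable lborel {b..e} (\<lambda>\<sigma>. (norm (d \<sigma>))\<^sup>2)"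
      using d assms(4) L2_on_subinterval[of b T d b e] unfolding mild_solution_iff L2_on_Icc_iff by simp
    show "set_integrable lborel {b..e} (\<lambda>_. (C * (e - b))\<^sup>2)"
      by (rule set_integrable_Icc_bounded[where C="(C * (e - b))\<^sup>2"]) (auto simp: set_borel_measurable_def)
    show "(norm (d \<sigma>))\<^sup>2 \<le> (C * (e - b))\<^sup>2" if "\<sigma> \<in> {b..e}" for \<sigma>
      using bound[OF that] by (simp add: power_mono)
  qed
  also have "\<dots> = (C * (e - b))\<^sup>2 * (e - b)"
    using assms(3) by (simp add: set_integral_const emeasure_lborel_Icc_eq)
  also have "\<dots> = M\<^sup>2 * (sqrt K_norm_sq)\<^sup>2 * (sqrt N)\<^sup>2 * (e - b) ^ 3"
    unfolding C_def power_mult_distrib by (simp add: power3_eq_cube power2_eq_square[of "e - b"] mult_ac)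
  also have "\<dots> = (M\<^sup>2 * K_norm_sq * (e - b) ^ 3) * N"
    using N_nonneg K_norm_sq_nonneg by simp
  finally have "N \<le> (M\<^sup>2 * K_norm_sq * (e - b) ^ 3) * N" .
  with small N_nonneg have "N = 0"
    using mult_le_cancel_right1[of N "M\<^sup>2 * K_norm_sq * (e - b) ^ 3"] by linarith
  then show ?thesis
    using bound by (simp add: C_def)
qed

lemma mild_solution_homogeneous_extend:
  assumes d: "mild_solution S K B a T 0 (\<lambda>_. 0) (\<lambda>_. 0) d"
    and "0 \<le> a" "a \<le> b" "b \<le> e" "e \<le> T" and small: "M\<^sup>2 * K_norm_sq * (e - b) ^ 3 < 1"
    and vanish: "\<forall>t\<in>{a..b}. d t = 0"
  shows "\<forall>t\<in>{a..e}. d t = 0"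
proof -
  \<comment> \<open>restarted at \<open>b\<close>, the problem has zero data again because \<open>d\<close> vanishes on \<open>[a, b]\<close>\<close>
  have "mild_solution S K B b T (d b) (\<lambda>s. if s \<le> a then 0 else d s) (\<lambda>_. 0) d"
    by (rule mild_solution_restrict[OF d]) (use assms in auto)
  moreover have "d b = 0"
    using vanish assms by simp
  ultimately have "mild_solution S K B b T 0 (\<lambda>s. if s \<le> a then 0 else d s) (\<lambda>_. 0) d"
    by simp
  then have "mild_solution S K B b T 0 (\<lambda>_. 0) (\<lambda>_. 0) d"
    by (rule mild_solution_cong) (use vanish assms in auto)
  then have "\<forall>t\<in>{b..e}. d t = 0"
    by (rule mild_solution_homogeneous_short) (use assms in auto)
  with vanish show ?thesis
    by (metis atLeastAtMost_iff linear)
qed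

lemma small_step_exists:
  obtains \<delta> where "0 < \<delta>" "\<And>r. 0 \<le> r \<Longrightarrow> r \<le> \<delta> \<Longrightarrow> M\<^sup>2 * K_norm_sq * r ^ 3 < 1"
proof
  define c where "c = M\<^sup>2 * K_norm_sq"
  have c_nonneg: "0 \<le> c"
    unfolding c_def using K_norm_sq_nonneg by simp
  then show "0 < 1 / (c + 1)"
    by simp
  fix r
  assume r: "0 \<le> r" "r \<le> 1 / (c + 1)"
  have "r ^ 3 \<le> (1 / (c + 1)) ^ 3"
    using r by (intro power_mono) auto
  also have "\<dots> \<le> (1 / (c + 1)) ^ 1"
    using c_nonneg by (intro power_decreasing) auto
  finally have "c * r ^ 3 \<le> c * (1 / (c + 1))"
    using c_nonneg by (intro mult_left_mono) auto
  also have "\<dots> < 1"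
    using c_nonneg by (simp add: field_simps)
  finally show "M\<^sup>2 * K_norm_sq * r ^ 3 < 1"
    unfolding c_def .
qed

lemma mild_solution_homogeneous_eq_0:
  assumes d: "mild_solution S K B a T 0 (\<lambda>_. 0) (\<lambda>_. 0) d" and "0 \<le> a"
  shows "\<forall>t\<in>{a..T}. d t = 0"
proof (intro ballI)
  fix t
  assume t: "t \<in> {a..T}"
  obtain \<delta> where \<delta>: "0 < \<delta>" "\<And>r. 0 \<le> r \<Longrightarrow> r \<le> \<delta> \<Longrightarrow> M\<^sup>2 * K_norm_sq * r ^ 3 < 1"
    using small_step_exists by blast
  have vanish: "\<forall>t\<in>{a..min T (a + real n * \<delta>)}. d t = 0" for n
  proof (induction n)
    case 0
    have "d a = 0"
      using d t unfolding mild_solution_iff by (simp add: mild_rhs_at_start)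
    then show ?case
      by (metis atLeastAtMost_iff min.bounded_iff mult_zero_left of_nat_0 order_antisym add_0_right)
  next
    case (Suc n)
    define b where "b = min T (a + real n * \<delta>)"
    define e where "e = min T (a + real (Suc n) * \<delta>)"
    have "a \<le> b" "b \<le> e" "e \<le> T" "e \<le> b + \<delta>"
      using assms(2) t \<delta>(1) unfolding b_def e_def by (auto simp: min_def distrib_right)
    moreover have "M\<^sup>2 * K_norm_sq * (e - b) ^ 3 < 1"
      using \<delta>(2)[of "e - b"] \<open>b \<le> e\<close> \<open>e \<le> b + \<delta>\<close> by simp
    ultimately have "\<forall>t\<in>{a..e}. d t = 0"
      using mild_solution_homogeneous_extend[OF d assms(2)] Suc.IH[folded b_def] by blast
    then show ?case
      unfolding e_def .
  qed
  obtain n :: nat where "(t - a) / \<delta> \<le> real n"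
    using real_arch_simple by blast
  then have "t \<le> a + real n * \<delta>"
    using \<delta> by (simp add: field_simps)
  then show "d t = 0"
    using vanish[of n] t by auto
qed

lemma mild_solution_unique:
  assumes w: "mild_solution S K B a T x0 h u w" and w': "mild_solution S K B a T x0 h u' w'"
    and "0 \<le> a" "L2_on 0 a h" and u: "L2_on a T u" and u': "L2_on a T u'"
    and u_eq: "AE s in lborel. s \<in> {a..T} \<longrightarrow> u s = u' s"
  shows "\<forall>t\<in>{a..T}. w t = w' t"
proof -
  have "mild_solution S K B a T (1 *\<^sub>R x0 + (-1) *\<^sub>R x0) (\<lambda>s. 1 *\<^sub>R h s + (-1) *\<^sub>R h s)
      (\<lambda>s. 1 *\<^sub>R u s + (-1) *\<^sub>R u' s) (\<lambda>s. 1 *\<^sub>R w s + (-1) *\<^sub>R w' s)"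
    by (rule mild_solution_lincomb[OF w w']) (use assms in auto)
  then have "mild_solution S K B a T 0 (\<lambda>_. 0) (\<lambda>s. u s - u' s) (\<lambda>s. w s - w' s)"
    by simp
  moreover note L2_on_diff[OF u u']
  ultimately have "mild_solution S K B a T 0 (\<lambda>_. 0) (\<lambda>_. 0) (\<lambda>s. w s - w' s)"
    using u_eq by (auto elim!: mild_solution_cong[OF _ assms(3)] eventually_mono)
  from mild_solution_homogeneous_eq_0[OF this assms(3)] show ?thesis
    by simp
qed

end

section \<open>Optimal pairs\<close>

locale lq_problem = volterra_system S K B T M
  for S :: "real \<Rightarrow> 'h::{real_inner,banach,second_countable_topology} \<Rightarrow> 'h"
    and K B T M +
  fixes Q :: "'h \<Rightarrow> 'h"
  assumes Q_bounded_linear: "bounded_linear Q"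
    and Q_nonneg: "\<And>x. 0 \<le> inner (Q x) x"
begin

lemma optimal_pair_restrict:
  assumes opt: "optimal_pair S K B Q a T x0 h u w" and h: "L2_on 0 a h"
    and "0 \<le> a" "a \<le> a1" "a1 \<le> T"
  shows "optimal_pair S K B Q a1 T (w a1) (\<lambda>s. if s \<le> a then h s else w s) u w"
proof -
  have u: "L2_on a T u" and w: "mild_solution S K B a T x0 h u w"
    and min: "\<And>v z. L2_on a T v \<Longrightarrow> mild_solution S K B a T x0 h v z \<Longrightarrow> cost Q a T u w \<le> cost Q a T v z"
    using opt unfolding optimal_pair_def by auto
  have w_L2: "L2_on a T w"
    using w unfolding mild_solution_iff by simp
  have "cost Q a1 T u w \<le> cost Q a1 T v z"
    if v: "L2_on a1 T v" and z: "mild_solution S K B a1 T (w a1) (\<lambda>s. if s \<le> a then h s else w s) v z" for v z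
  proof -
    have z_L2: "L2_on a1 T z"
      using z unfolding mild_solution_iff by simp
    have "cost Q a T u w \<le> cost Q a T (\<lambda>s. if s \<le> a1 then u s else v s) (\<lambda>s. if s \<le> a1 then w s else z s)"
      using assms L2_on_subinterval[OF u, of a a1]
      by (intro min mild_solution_join[OF w z h u v] L2_on_join[OF _ v]) auto
    then show ?thesis
      using assms L2_on_subinterval[OF u, of a a1] L2_on_subinterval[OF w_L2, of a a1]
      by (simp add: cost_split[OF Q_bounded_linear u w_L2, of a1] cost_join[OF Q_bounded_linear _ _ v z_L2])
  qed
  then show ?thesis
    unfolding optimal_pair_def
    using assms L2_on_subinterval[OF u, of a1 T] by (auto intro: mild_solution_restrict[OF w h u])
qed

lemma optimal_pair_unique:
  assumes opt1: "optimal_pair S K B Q a T x0 h u1 w1" and opt2: "optimal_pair S K B Q a T x0 h u2 w2"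
    and h: "L2_on 0 a h" and "0 \<le> a"
  shows "(AE t in lborel. t \<in> {a..T} \<longrightarrow> u1 t = u2 t) \<and> (\<forall>t\<in>{a..T}. w1 t = w2 t)"
proof -
  have u: "L2_on a T u1" "L2_on a T u2"
    and w: "mild_solution S K B a T x0 h u1 w1" "mild_solution S K B a T x0 h u2 w2"
    and min: "\<And>v z. L2_on a T v \<Longrightarrow> mild_solution S K B a T x0 h v z \<Longrightarrow> cost Q a T u1 w1 \<le> cost Q a T v z"
      "\<And>v z. L2_on a T v \<Longrightarrow> mild_solution S K B a T x0 h v z \<Longrightarrow> cost Q a T u2 w2 \<le> cost Q a T v z"
    using opt1 opt2 unfolding optimal_pair_def by auto
  have w_L2: "L2_on a T w1" "L2_on a T w2"
    using w unfolding mild_solution_iff by auto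
  have same_cost: "cost Q a T u1 w1 = cost Q a T u2 w2"
    using min(1)[OF u(2) w(2)] min(2)[OF u(1) w(1)] by simp
  \<comment> \<open>strict convexity: the midpoint is admissible and costs less by a quarter of the cost of the difference\<close>
  have "mild_solution S K B a T ((1/2) *\<^sub>R x0 + (1/2) *\<^sub>R x0) (\<lambda>s. (1/2) *\<^sub>R h s + (1/2) *\<^sub>R h s)
      (\<lambda>s. (1/2) *\<^sub>R u1 s + (1/2) *\<^sub>R u2 s) (\<lambda>s. (1/2) *\<^sub>R w1 s + (1/2) *\<^sub>R w2 s)"
    by (rule mild_solution_lincomb[OF w]) (use assms u in auto)
  then have "mild_solution S K B a T x0 h
      (\<lambda>s. (1/2) *\<^sub>R u1 s + (1/2) *\<^sub>R u2 s) (\<lambda>s. (1/2) *\<^sub>R w1 s + (1/2) *\<^sub>R w2 s)"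
    by (simp add: scaleR_add_left[symmetric])
  then have "cost Q a T u1 w1 \<le> cost Q a T
      (\<lambda>s. (1/2) *\<^sub>R u1 s + (1/2) *\<^sub>R u2 s) (\<lambda>s. (1/2) *\<^sub>R w1 s + (1/2) *\<^sub>R w2 s)"
    using L2_on_lincomb[OF u] by (intro min(1))
  then have "cost Q a T (\<lambda>t. u1 t - u2 t) (\<lambda>t. w1 t - w2 t) = 0"
    using cost_midpoint[OF Q_bounded_linear u w_L2] same_cost
      cost_nonneg[OF Q_nonneg, of a T "\<lambda>t. u1 t - u2 t" "\<lambda>t. w1 t - w2 t"]
    by simp
  then have "AE t in lborel. t \<in> {a..T} \<longrightarrow> u1 t - u2 t = 0"
    by (intro control_AE_eq_0_of_cost_eq_0[OF Q_bounded_linear Q_nonneg L2_on_diff[OF u] L2_on_diff[OF w_L2]])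
  then have u_eq: "AE t in lborel. t \<in> {a..T} \<longrightarrow> u1 t = u2 t"
    by (auto elim!: eventually_mono)
  with mild_solution_unique[OF w assms(4) h u] show ?thesis
    by simp
qed

end

theorem proposition3p3:
  fixes S :: "real \<Rightarrow> 'h::{real_inner,banach,second_countable_topology} \<Rightarrow> 'h"
    and A :: "'h \<Rightarrow> 'h" and DA :: "'h set"
    and Jh :: "'h \<Rightarrow> 'h" and Ju :: "'u::{real_inner,banach,second_countable_topology} \<Rightarrow> 'u"
    and B :: "'u \<Rightarrow> 'h"
    and Q :: "'h \<Rightarrow> 'h" and K :: "real \<Rightarrow> real"
    and T C \<omega> \<tau> \<tau>1 :: real
    and \<xi>0 :: 'h and \<xi> :: "real \<Rightarrow> 'h"
    and uh u1 :: "real \<Rightarrow> 'u" and wh w1 :: "real \<Rightarrow> 'h"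
  assumes "T > 0"
    and "complex_structure Jh" and "complex_structure Ju"
    and "C0_semigroup S" and "\<forall>t\<ge>0. \<forall>x. S t (Jh x) = Jh (S t x)"
    and "generator S DA A"
    and "\<forall>t\<ge>0. \<forall>x. norm (S t x) \<le> C * exp (\<omega> * t) * norm x"
    and "L2_on 0 T K"
    and "bounded_linear B" and "\<forall>x. B (Ju x) = Jh (B x)"
    and "bounded_linear Q" and "\<forall>x. Q (Jh x) = Jh (Q x)"
    and "\<forall>x y. inner (Q x) y = inner x (Q y)" and "\<forall>x. inner (Q x) x \<ge> 0"
    and "\<tau> \<in> {0<..<T}" and "L2_on 0 \<tau> \<xi>"
    and "optimal_pair S K B Q \<tau> T \<xi>0 \<xi> uh wh"
    and "\<tau>1 \<in> {\<tau><..<T}"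
    and "optimal_pair S K B Q \<tau>1 T (wh \<tau>1) (\<lambda>s. if s \<le> \<tau> then \<xi> s else wh s) u1 w1"
  shows "(AE t in lborel. t \<in> {\<tau>1<..<T} \<longrightarrow> uh t = u1 t) \<and> (\<forall>t\<in>{\<tau>1<..<T}. wh t = w1 t)"
proof -
  interpret lq_problem S K B T "\<bar>C\<bar> * exp (\<bar>\<omega>\<bar> * T)" Q
    using assms(1,4,8,9,11,14) exponential_bound_on_interval[OF assms(7)]
    by (intro lq_problem.intro volterra_system.intro lq_problem_axioms.intro) auto
  define y where "y s = (if s \<le> \<tau> then \<xi> s else wh s)" for s
  have \<tau>: "0 \<le> \<tau>" "\<tau> \<le> \<tau>1" "\<tau>1 \<le> T"
    using assms(15,18) by auto
  have opt: "optimal_pair S K B Q \<tau>1 T (wh \<tau>1) y uh wh"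
    unfolding y_def using \<tau> by (rule optimal_pair_restrict[OF assms(17,16)])
  have "L2_on \<tau> T wh"
    using assms(17) unfolding optimal_pair_def mild_solution_iff by simp
  then have "L2_on 0 \<tau>1 y"
    unfolding y_def using \<tau> L2_on_subinterval[of \<tau> T wh \<tau> \<tau>1] by (intro L2_on_join[OF assms(16)]) auto
  then have "(AE t in lborel. t \<in> {\<tau>1..T} \<longrightarrow> uh t = u1 t) \<and> (\<forall>t\<in>{\<tau>1..T}. wh t = w1 t)"
    using \<tau> by (intro optimal_pair_unique[OF opt assms(19)[folded y_def]]) auto
  then show ?thesis
    by (auto elim!: eventually_mono)
qed

end
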